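(* Fix $L\in\{2,3,\ldots\}$, $a>200L$, and an integer $M>L^2$ with $1-\sum_{m=M}^\infty m^{-2}\ge0.9$ and $M^2\ge2^{14}$. For $m\ge M$ let $\theta_m=1-\sum_{k=M}^m k^{-2}$, let $r_m$ be the unique integer with $m^2\le L^{r_m}<Lm^2$, and let $R_m=M+\sum_{i=M}^m r_i$. Let $m\ge M$, $q\in[0,1]$, and let $J$ be an isometry-invariant kernel on $\mathbb{H}^1_L$ such that $J(L^n)\ge aL^{-2n+1}\log n$ for all $n>R_m$. Then \[\mathbb{P}_{q,J}(\Lambda_{R_{m+1}}(0)\text{ is bad})\le L^2(m+1)^4\,\mathbb{P}_{q,J}(\Lambda_{R_m}(0)\text{ is bad})^2+(m+1)^2L^3m^{-\frac{a}{10L}}.\]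
   Context: $\mathbb{H}^1_L$ is the group $\bigoplus_{i=1}^\infty\mathbb{Z}/L\mathbb{Z}$ with ultrametric $\|x-y\|=L^{\max\{i:x_i\neq y_i\}}$ for $x\neq y$; $\Lambda_n(u)$ is the ball of radius $L^n$ around $u$ (an $n$-block, of cardinality $L^n$). Edges are unordered pairs of distinct vertices, $|e|=\|x-y\|$; an isometry-invariant kernel ($J(e)$ depending only on $|e|$) is written as a function $J(L^n)$ of the edge length. $\mathbb{P}_{q,J}$ is the law of the random graph in which each vertex is open independently with probability $q$ and, independently, each edge between open vertices is open with probability $1-\exp(-J(e))$. For $A\subseteq\mathbb{H}^1_L$, the clusters inside $A$ are the connected components formed by open vertices of $A$ using open edges with both endpoints in $A$; $K_{\max}(A)$ denotes a largest such cluster (ties broken by a deterministic rule depending only on the configuration inside $A$). A block $\Lambda_{R_m}(u)$ is good if $|K_{\max}(\Lambda_{R_m}(u))|\ge\theta_m|\Lambda_{R_m}(u)|$, and bad otherwise. *)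

theory Defs
  imports "HOL-Analysis.Analysis" "HOL-Probability.Probability"
begin

text \<open>The hierarchical lattice H^1_L: sequences x :: nat => nat with entries in {0..L-1},
  index 0 unused (always 0), finitely many nonzero entries (coordinates i = 1,2,...).\<close>
definition hier :: "nat \<Rightarrow> (nat \<Rightarrow> nat) set" where
  "hier L = {x. (\<forall>i. x i < L) \<and> x 0 = 0 \<and> finite {i. x i \<noteq> 0}}"

text \<open>The n-block Lambda_n(u): ball of radius L^n around u, i.e. points agreeing with u
  in all coordinates i > n.\<close>
definition block :: "nat \<Rightarrow> nat \<Rightarrow> (nat \<Rightarrow> nat) \<Rightarrow> (nat \<Rightarrow> nat) set" where
  "block L n u = {x \<in> hier L. \<forall>i>n. x i = u i}"

definition edges_in :: "(nat \<Rightarrow> nat) set \<Rightarrow> (nat \<Rightarrow> nat) set set" where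
  "edges_in A = {e. \<exists>x\<in>A. \<exists>y\<in>A. x \<noteq> y \<and> e = {x, y}}"

text \<open>Edge level: |e| = L ^ (edge_level e), where edge_level = max index of disagreement.\<close>
definition edge_level :: "(nat \<Rightarrow> nat) set \<Rightarrow> nat" where
  "edge_level e = Max {i. \<exists>x\<in>e. \<exists>y\<in>e. x i \<noteq> y i}"

text \<open>Law of the configuration restricted to the finite set A (vertex states, edge states);
  J n is the kernel value at edge length L^n.  Edge variables are sampled for all edges in A;
  an edge is effectively open iff it is open and both endpoints are open, which gives exactly
  the marginal of P_{q,J} on the configuration inside A.\<close>
definition config_pmf ::
  "real \<Rightarrow> (nat \<Rightarrow> real) \<Rightarrow> (nat \<Rightarrow> nat) set
     \<Rightarrow> (((nat \<Rightarrow> nat) \<Rightarrow> bool) \<times> ((nat \<Rightarrow> nat) set \<Rightarrow> bool)) pmf" where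
  "config_pmf q J A =
     pair_pmf (Pi_pmf A False (\<lambda>_. bernoulli_pmf q))
              (Pi_pmf (edges_in A) False (\<lambda>e. bernoulli_pmf (1 - exp (- J (edge_level e)))))"

definition adj :: "(nat \<Rightarrow> nat) set \<Rightarrow> ((nat \<Rightarrow> nat) \<Rightarrow> bool) \<Rightarrow> ((nat \<Rightarrow> nat) set \<Rightarrow> bool)
                    \<Rightarrow> ((nat \<Rightarrow> nat) \<times> (nat \<Rightarrow> nat)) set" where
  "adj A \<sigma> \<omega> = {(x, y). x \<in> A \<and> y \<in> A \<and> x \<noteq> y \<and> \<sigma> x \<and> \<sigma> y \<and> \<omega> {x, y}}"

definition cluster :: "(nat \<Rightarrow> nat) set \<Rightarrow> ((nat \<Rightarrow> nat) \<Rightarrow> bool) \<Rightarrow> ((nat \<Rightarrow> nat) set \<Rightarrow> bool)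
                    \<Rightarrow> (nat \<Rightarrow> nat) \<Rightarrow> (nat \<Rightarrow> nat) set" where
  "cluster A \<sigma> \<omega> x = {y. (x, y) \<in> (adj A \<sigma> \<omega>)\<^sup>*}"

definition kmax_size :: "(nat \<Rightarrow> nat) set \<Rightarrow> ((nat \<Rightarrow> nat) \<Rightarrow> bool) \<Rightarrow> ((nat \<Rightarrow> nat) set \<Rightarrow> bool) \<Rightarrow> nat" where
  "kmax_size A \<sigma> \<omega> = Max (insert 0 {card (cluster A \<sigma> \<omega> x) | x. x \<in> A \<and> \<sigma> x})"

definition theta :: "nat \<Rightarrow> nat \<Rightarrow> real" where
  "theta M m = 1 - (\<Sum>k=M..m. 1 / (real k)^2)"

text \<open>r_m: the unique integer with m^2 \<le> L^r < L m^2 (it is nonnegative since m \<ge> 1).\<close>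
definition r_scale :: "nat \<Rightarrow> nat \<Rightarrow> nat" where
  "r_scale L m = (THE r::nat. m^2 \<le> L^r \<and> L^r < L * m^2)"

definition R_scale :: "nat \<Rightarrow> nat \<Rightarrow> nat \<Rightarrow> nat" where
  "R_scale L M m = M + (\<Sum>i=M..m. r_scale L i)"

definition prob_bad :: "nat \<Rightarrow> nat \<Rightarrow> real \<Rightarrow> (nat \<Rightarrow> real) \<Rightarrow> nat \<Rightarrow> real" where
  "prob_bad L M q J m =
    (let A = block L (R_scale L M m) (\<lambda>_. 0) in
     measure_pmf.prob (config_pmf q J A)
       {(\<sigma>, \<omega>). real (kmax_size A \<sigma> \<omega>) < theta M m * real (card A)})"

end

theory Submission
  imports Defs
begin

(* Write \<Lambda> = \<Lambda>_{R_{m+1}}(0) as the disjoint union of N = L^{r_{m+1}} blocks of scale R_m, and call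
   the union of the chosen large clusters of the good sub-blocks inside a j-block its core.
   Unless two sub-blocks are bad, or two sibling j-blocks (R_m \<le> j < R_{m+1}) with cores of size
   at least \<theta>_m L^j / 2 are joined by no open edge, induction over the scales shows that all
   these cores are connected inside \<Lambda>, so \<Lambda> contains a cluster of size at least
   (N - 1) \<theta>_m L^{R_m} \<ge> \<theta>_{m+1} |\<Lambda>|.  By independence and translation invariance the first event
   has probability at most N^2 P(bad)^2; the second is a union of at most L^{r_{m+1}+2} events,
   each of probability at most exp (-J(L^{j+1}) (\<theta>_m L^j / 2)^2) \<le> m^{-a/(10L)}. *)

section \<open>Product measures\<close>

lemma Pi_pmf_split_disjoint:
  fixes A :: "'a set" and d :: 'b and p :: "'a \<Rightarrow> 'b pmf"
  assumes "finite A" "B1 \<subseteq> A" "B2 \<subseteq> A" "B1 \<inter> B2 = {}"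
  shows "map_pmf (\<lambda>f. (\<lambda>x. if x \<in> B1 then f x else d, \<lambda>x. if x \<in> B2 then f x else d)) (Pi_pmf A d p)
       = pair_pmf (Pi_pmf B1 d p) (Pi_pmf B2 d p)"
proof -
  define F :: "('a \<Rightarrow> 'b) \<Rightarrow> ('a \<Rightarrow> 'b) \<times> ('a \<Rightarrow> 'b)" where "F = (\<lambda>f. (\<lambda>x. if x \<in> B1 then f x else d, \<lambda>x. if x \<in> B2 then f x else d))"
  define G :: "('a \<Rightarrow> 'b) \<times> ('a \<Rightarrow> 'b) \<Rightarrow> 'a \<Rightarrow> 'b" where "G = (\<lambda>(f,g) x. if x \<in> B1 then f x else g x)"
  define U :: "('a \<Rightarrow> 'b) \<Rightarrow> 'a \<Rightarrow> 'b" where "U = (\<lambda>f x. if x \<in> B1 \<union> B2 then f x else d)"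
  have f1: "finite B1" "finite B2" using assms finite_subset by blast+
  have "Pi_pmf (B1 \<union> B2) d p = map_pmf U (Pi_pmf A d p)"
    unfolding U_def using assms by (intro Pi_pmf_subset) auto
  moreover have "Pi_pmf (B1 \<union> B2) d p = map_pmf G (pair_pmf (Pi_pmf B1 d p) (Pi_pmf B2 d p))"
    unfolding G_def using f1 assms by (intro Pi_pmf_union) auto
  ultimately have eq: "map_pmf U (Pi_pmf A d p) = map_pmf G (pair_pmf (Pi_pmf B1 d p) (Pi_pmf B2 d p))" by simp
  have FU: "F (U f) = F f" for f unfolding F_def U_def by (auto simp: fun_eq_iff)
  have FG: "F (G z) = z" if z: "z \<in> set_pmf (pair_pmf (Pi_pmf B1 d p) (Pi_pmf B2 d p))" for z
  proof -
    obtain f g where zfg: "z = (f,g)" by (cases z)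
    have "f \<in> set_pmf (Pi_pmf B1 d p)" "g \<in> set_pmf (Pi_pmf B2 d p)" using z zfg by auto
    then have "\<forall>x. x \<notin> B1 \<longrightarrow> f x = d" "\<forall>x. x \<notin> B2 \<longrightarrow> g x = d"
      using set_Pi_pmf_subset[OF f1(1), of d p] set_Pi_pmf_subset[OF f1(2), of d p] by blast+
    then show ?thesis unfolding zfg F_def G_def using assms(4) by (auto simp: fun_eq_iff)
  qed
  have "map_pmf F (Pi_pmf A d p) = map_pmf F (map_pmf U (Pi_pmf A d p))"
    by (simp add: map_pmf_comp FU)
  also have "\<dots> = map_pmf F (map_pmf G (pair_pmf (Pi_pmf B1 d p) (Pi_pmf B2 d p)))"
    by (simp only: eq)
  also have "\<dots> = map_pmf (\<lambda>z. z) (pair_pmf (Pi_pmf B1 d p) (Pi_pmf B2 d p))"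
    unfolding map_pmf_comp by (intro map_pmf_cong refl) (simp add: FG)
  finally show ?thesis unfolding F_def by simp
qed

lemma Pi_pmf_image_involution:
  fixes h :: "'a \<Rightarrow> 'a" and p p' :: "'a \<Rightarrow> 'b pmf"
  assumes "finite B" "\<And>x. h (h x) = x" "\<And>x. x \<in> B \<Longrightarrow> p' (h x) = p x"
  shows "Pi_pmf (h ` B) d p' = map_pmf (\<lambda>g. g \<circ> h) (Pi_pmf B d p)"
proof (rule pmf_eqI)
  fix f :: "'a \<Rightarrow> 'b"
  have injh: "inj h" by (metis assms(2) injI)
  have injc: "inj (\<lambda>g::'a \<Rightarrow> 'b. g \<circ> h)"
    by (rule injI) (metis assms(2) comp_apply fun_eq_iff)
  have ff: "f = (f \<circ> h) \<circ> h" using assms(2) by (simp add: fun_eq_iff)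
  have "pmf (map_pmf (\<lambda>g. g \<circ> h) (Pi_pmf B d p)) ((f \<circ> h) \<circ> h) = pmf (Pi_pmf B d p) (f \<circ> h)"
    by (rule pmf_map_inj'[OF injc])
  then have 1: "pmf (map_pmf (\<lambda>g. g \<circ> h) (Pi_pmf B d p)) f = pmf (Pi_pmf B d p) (f \<circ> h)"
    using ff by simp
  have c: "(\<forall>x. x \<notin> B \<longrightarrow> (f \<circ> h) x = d) \<longleftrightarrow> (\<forall>y. y \<notin> h ` B \<longrightarrow> f y = d)"
    by (auto simp: image_iff) (metis assms(2))+
  have pr: "(\<Prod>x\<in>B. pmf (p x) ((f \<circ> h) x)) = (\<Prod>y\<in>h ` B. pmf (p' y) (f y))"
    by (subst prod.reindex) (auto intro: inj_on_subset[OF injh] simp: assms(3))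
  have "pmf (Pi_pmf B d p) (f \<circ> h) = (if (\<forall>x. x \<notin> B \<longrightarrow> (f \<circ> h) x = d) then \<Prod>x\<in>B. pmf (p x) ((f \<circ> h) x) else 0)"
    by (rule pmf_Pi[OF assms(1)])
  also have "\<dots> = (if (\<forall>y. y \<notin> h ` B \<longrightarrow> f y = d) then \<Prod>y\<in>h ` B. pmf (p' y) (f y) else 0)"
    by (simp only: c pr)
  also have "\<dots> = pmf (Pi_pmf (h ` B) d p') f"
    by (rule pmf_Pi[symmetric]) (simp add: assms(1))
  finally show "pmf (Pi_pmf (h ` B) d p') f = pmf (map_pmf (\<lambda>g. g \<circ> h) (Pi_pmf B d p)) f"
    using 1 by simp
qed

lemma measure_pair_pmf_Times:
  "measure_pmf.prob (pair_pmf P Q) (S \<times> T) = measure_pmf.prob P S * measure_pmf.prob Q T"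
proof -
  have e: "(S \<times> T) \<inter> set_pmf (pair_pmf P Q) = (S \<inter> set_pmf P) \<times> (T \<inter> set_pmf Q)" by auto
  have "measure_pmf.prob (pair_pmf P Q) (S \<times> T) = measure_pmf.prob (pair_pmf P Q) ((S \<inter> set_pmf P) \<times> (T \<inter> set_pmf Q))"
    by (simp only: measure_Int_set_pmf[symmetric, of "pair_pmf P Q" "S \<times> T"] e)
  also have "\<dots> = measure_pmf.prob P (S \<inter> set_pmf P) * measure_pmf.prob Q (T \<inter> set_pmf Q)"
    by (rule measure_pmf_prob_product; rule countable_subset[OF _ countable_set_pmf]; blast)
  also have "\<dots> = measure_pmf.prob P S * measure_pmf.prob Q T"
    by (simp add: measure_Int_set_pmf)
  finally show ?thesis .
qed

lemma measure_pair_pmf_section_le: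
  assumes "\<And>a. a \<in> S \<Longrightarrow> measure_pmf.prob Q (T a) \<le> \<beta>" "\<beta> \<ge> 0"
  shows "measure_pmf.prob (pair_pmf P Q) {(a,b). a \<in> S \<and> b \<in> T a} \<le> \<beta>"
proof -
  let ?X = "{(a,b). a \<in> S \<and> b \<in> T a}"
  have sl: "(\<integral>\<^sup>+b. indicator ?X (a,b) \<partial>Q) \<le> ennreal \<beta>" for a
  proof (cases "a \<in> S")
    case True
    have "(\<integral>\<^sup>+b. indicator ?X (a,b) \<partial>Q) = (\<integral>\<^sup>+b. indicator (T a) b \<partial>Q)"
      using True by (intro nn_integral_cong) (auto simp: indicator_def)
    also have "\<dots> = emeasure Q (T a)" by simp
    also have "\<dots> = ennreal (measure_pmf.prob Q (T a))" by (simp add: measure_pmf.emeasure_eq_measure)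
    also have "\<dots> \<le> ennreal \<beta>" using assms(1)[OF True] by (rule ennreal_leI)
    finally show ?thesis .
  next
    case False
    have "(\<integral>\<^sup>+b. indicator ?X (a,b) \<partial>Q) = (\<integral>\<^sup>+b. 0 \<partial>Q)"
      using False by (intro nn_integral_cong) (auto simp: indicator_def)
    then show ?thesis by simp
  qed
  have "emeasure (measure_pmf (pair_pmf P Q)) ?X = (\<integral>\<^sup>+x. indicator ?X x \<partial>pair_pmf P Q)"
    by simp
  also have "\<dots> = (\<integral>\<^sup>+a. \<integral>\<^sup>+b. indicator ?X (a,b) \<partial>Q \<partial>P)"
    by (rule nn_integral_pair_pmf')
  also have "\<dots> \<le> (\<integral>\<^sup>+a. ennreal \<beta> \<partial>P)"
    by (intro nn_integral_mono sl)
  also have "\<dots> = ennreal \<beta>" by (simp add: measure_pmf.emeasure_space_1)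
  finally have "ennreal (measure_pmf.prob (pair_pmf P Q) ?X) \<le> ennreal \<beta>"
    by (simp add: measure_pmf.emeasure_eq_measure)
  then show ?thesis using assms(2) by simp
qed

lemma measure_Pi_pmf_all_False:
  assumes "finite W" "E \<subseteq> W" "\<And>e. e \<in> W \<Longrightarrow> 0 \<le> p e \<and> p e \<le> 1"
  shows "measure_pmf.prob (Pi_pmf W False (\<lambda>e. bernoulli_pmf (p e))) {f. \<forall>e\<in>E. \<not> f e}
         = (\<Prod>e\<in>E. (1 - p e))"
proof -
  let ?P = "Pi_pmf W False (\<lambda>e. bernoulli_pmf (p e))"
  let ?B = "\<lambda>e. if e \<in> E then {False} else UNIV"
  have sub: "set_pmf ?P \<subseteq> {f. \<forall>x. x \<notin> W \<longrightarrow> f x = False}"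
    by (rule set_Pi_pmf_subset[OF assms(1)])
  have eq: "{f. \<forall>e\<in>E. \<not> f e} \<inter> set_pmf ?P = PiE_dflt W False ?B \<inter> set_pmf ?P"
    using sub assms(2) unfolding PiE_dflt_def by auto
  have "measure_pmf.prob ?P {f. \<forall>e\<in>E. \<not> f e} = measure_pmf.prob ?P (PiE_dflt W False ?B)"
    by (subst (1 2) measure_Int_set_pmf[symmetric]) (simp only: eq)
  also have "\<dots> = (\<Prod>e\<in>W. measure_pmf.prob (bernoulli_pmf (p e)) (?B e))"
    by (rule measure_Pi_pmf_PiE_dflt[OF assms(1)])
  also have "\<dots> = (\<Prod>e\<in>W. if e \<in> E then 1 - p e else 1)"
    using assms(3) by (intro prod.cong refl) (simp add: measure_pmf_single)
  also have "\<dots> = (\<Prod>e\<in>E. (1 - p e))"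
    using assms(1,2) by (simp add: prod.If_cases Int_absorb1)
  finally show ?thesis .
qed

lemma pair_pmf_interchange:
  fixes A :: "'a pmf" and B :: "'b pmf" and C :: "'c pmf" and D :: "'d pmf"
  shows "map_pmf (\<lambda>((a,b),(c,d)). ((a,c),(b,d))) (pair_pmf (pair_pmf A B) (pair_pmf C D))
           = pair_pmf (pair_pmf A C) (pair_pmf B D)"
proof (rule pmf_eqI)
  fix z :: "('a \<times> 'c) \<times> ('b \<times> 'd)"
  obtain a c b d where z: "z = ((a,c),(b,d))" by (metis prod.collapse)
  have "inj (\<lambda>((a::'a,b::'b),(c::'c,d::'d)). ((a,c),(b,d)))"
    by (auto simp: inj_def)
  from pmf_map_inj'[OF this, of "pair_pmf (pair_pmf A B) (pair_pmf C D)" "((a,b),(c,d))"]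
  show "pmf (map_pmf (\<lambda>((a,b),(c,d)). ((a,c),(b,d))) (pair_pmf (pair_pmf A B) (pair_pmf C D))) z
          = pmf (pair_pmf (pair_pmf A C) (pair_pmf B D)) z"
    unfolding z by (simp add: pmf_pair)
qed

section \<open>The percolation configuration\<close>

type_synonym config = "((nat \<Rightarrow> nat) \<Rightarrow> bool) \<times> ((nat \<Rightarrow> nat) set \<Rightarrow> bool)"

(* Closed outside B, the default of Pi_pmf: masking a sample on A to B \<subseteq> A gives a sample on B. *)
definition mask :: "'a set \<Rightarrow> ('a \<Rightarrow> bool) \<Rightarrow> 'a \<Rightarrow> bool" where
  "mask B f = (\<lambda>x. if x \<in> B then f x else False)"

definition edge_pmf :: "(nat \<Rightarrow> real) \<Rightarrow> (nat \<Rightarrow> nat) set \<Rightarrow> bool pmf" where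
  "edge_pmf J e = bernoulli_pmf (1 - exp (- J (edge_level e)))"

lemma config_pmf_eq:
  "config_pmf q J A =
     pair_pmf (Pi_pmf A False (\<lambda>_. bernoulli_pmf q)) (Pi_pmf (edges_in A) False (edge_pmf J))"
  unfolding config_pmf_def edge_pmf_def by simp

lemma finite_edges_in: "finite A \<Longrightarrow> finite (edges_in A)"
proof -
  assume "finite A"
  have "edges_in A \<subseteq> (\<lambda>(x,y). {x,y}) ` (A \<times> A)" unfolding edges_in_def by auto
  then show ?thesis using \<open>finite A\<close> by (meson finite_SigmaI finite_imageI finite_subset)
qed

lemma edges_in_mono: "B \<subseteq> A \<Longrightarrow> edges_in B \<subseteq> edges_in A"
  unfolding edges_in_def by blast

lemma edges_in_disjoint: "B1 \<inter> B2 = {} \<Longrightarrow> edges_in B1 \<inter> edges_in B2 = {}"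
  unfolding edges_in_def by (auto simp: doubleton_eq_iff)

lemma config_pmf_split:
  assumes "finite A" "B1 \<subseteq> A" "B2 \<subseteq> A" "B1 \<inter> B2 = {}"
  shows "map_pmf (\<lambda>(\<sigma>,\<omega>). ((mask B1 \<sigma>, mask (edges_in B1) \<omega>), (mask B2 \<sigma>, mask (edges_in B2) \<omega>)))
           (config_pmf q J A) = pair_pmf (config_pmf q J B1) (config_pmf q J B2)"
proof -
  let ?V = "\<lambda>A. Pi_pmf A False (\<lambda>_. bernoulli_pmf q)"
  let ?E = "\<lambda>A. Pi_pmf (edges_in A) False (edge_pmf J)"
  have V: "map_pmf (\<lambda>f. (mask B1 f, mask B2 f)) (?V A) = pair_pmf (?V B1) (?V B2)"
    unfolding mask_def by (rule Pi_pmf_split_disjoint[OF assms])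
  have E: "map_pmf (\<lambda>f. (mask (edges_in B1) f, mask (edges_in B2) f)) (?E A) = pair_pmf (?E B1) (?E B2)"
    unfolding mask_def
    by (rule Pi_pmf_split_disjoint[OF finite_edges_in[OF assms(1)] edges_in_mono[OF assms(2)]
          edges_in_mono[OF assms(3)] edges_in_disjoint[OF assms(4)]])
  have "map_pmf (\<lambda>(\<sigma>,\<omega>). ((mask B1 \<sigma>, mask (edges_in B1) \<omega>), (mask B2 \<sigma>, mask (edges_in B2) \<omega>)))
          (config_pmf q J A)
      = map_pmf (\<lambda>((a,b),(c,d)). ((a,c),(b,d)))
          (map_pmf (\<lambda>(\<sigma>,\<omega>). ((mask B1 \<sigma>, mask B2 \<sigma>), (mask (edges_in B1) \<omega>, mask (edges_in B2) \<omega>)))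
            (pair_pmf (?V A) (?E A)))"
    unfolding config_pmf_eq map_pmf_comp by (intro map_pmf_cong refl) auto
  also have "\<dots> = map_pmf (\<lambda>((a,b),(c,d)). ((a,c),(b,d)))
      (pair_pmf (map_pmf (\<lambda>f. (mask B1 f, mask B2 f)) (?V A))
         (map_pmf (\<lambda>f. (mask (edges_in B1) f, mask (edges_in B2) f)) (?E A)))"
    by (subst map_pair[symmetric]) simp
  also have "\<dots> = pair_pmf (config_pmf q J B1) (config_pmf q J B2)"
    unfolding V E config_pmf_eq by (rule pair_pmf_interchange)
  finally show ?thesis .
qed

lemma config_pmf_split_edges:
  assumes "finite A" "W1 \<subseteq> edges_in A" "W2 \<subseteq> edges_in A" "W1 \<inter> W2 = {}"
  shows "map_pmf (\<lambda>(\<sigma>,\<omega>). ((\<sigma>, mask W1 \<omega>), mask W2 \<omega>)) (config_pmf q J A)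
     = pair_pmf (pair_pmf (Pi_pmf A False (\<lambda>_. bernoulli_pmf q)) (Pi_pmf W1 False (edge_pmf J)))
         (Pi_pmf W2 False (edge_pmf J))"
proof -
  let ?V = "Pi_pmf A False (\<lambda>_. bernoulli_pmf q)"
  let ?E = "Pi_pmf (edges_in A) False (edge_pmf J)"
  have E: "map_pmf (\<lambda>f. (mask W1 f, mask W2 f)) ?E
     = pair_pmf (Pi_pmf W1 False (edge_pmf J)) (Pi_pmf W2 False (edge_pmf J))"
    unfolding mask_def by (rule Pi_pmf_split_disjoint[OF finite_edges_in[OF assms(1)] assms(2,3,4)])
  have "map_pmf (\<lambda>(\<sigma>,\<omega>). ((\<sigma>, mask W1 \<omega>), mask W2 \<omega>)) (config_pmf q J A)
     = map_pmf (\<lambda>(x, (y, z)). ((x, y), z))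
         (map_pmf (\<lambda>(\<sigma>,\<omega>). (\<sigma>, (mask W1 \<omega>, mask W2 \<omega>))) (pair_pmf ?V ?E))"
    unfolding config_pmf_eq map_pmf_comp by (intro map_pmf_cong refl) auto
  also have "\<dots> = map_pmf (\<lambda>(x, (y, z)). ((x, y), z))
      (pair_pmf (map_pmf (\<lambda>x. x) ?V) (map_pmf (\<lambda>f. (mask W1 f, mask W2 f)) ?E))"
    by (subst map_pair[symmetric]) simp
  also have "\<dots> = pair_pmf (pair_pmf ?V (Pi_pmf W1 False (edge_pmf J))) (Pi_pmf W2 False (edge_pmf J))"
    unfolding E by (simp add: pair_pair_pmf)
  finally show ?thesis .
qed

definition edges_between :: "'a set \<Rightarrow> 'a set \<Rightarrow> 'a set set" where
  "edges_between C D = (\<lambda>(x, y). {x, y}) ` (C \<times> D)"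

lemma edges_between_mono: "C \<subseteq> C' \<Longrightarrow> D \<subseteq> D' \<Longrightarrow> edges_between C D \<subseteq> edges_between C' D'"
  unfolding edges_between_def by auto

lemma edges_between_subset_edges_in:
  assumes "C \<subseteq> A" "D \<subseteq> A" "C \<inter> D = {}"
  shows "edges_between C D \<subseteq> edges_in A"
proof
  fix e assume "e \<in> edges_between C D"
  then obtain x y where xy: "x \<in> C" "y \<in> D" "e = {x, y}" unfolding edges_between_def by auto
  then have "x \<noteq> y" using assms(3) by auto
  then show "e \<in> edges_in A" using xy assms(1,2) unfolding edges_in_def by auto
qed

lemma edges_in_disjoint_edges_between:
  "C \<inter> D = {} \<Longrightarrow> (edges_in C \<union> edges_in D) \<inter> edges_between C D = {}"
  unfolding edges_between_def edges_in_def by (auto simp: doubleton_eq_iff)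

lemma card_edges_between:
  assumes "finite C" "finite D" "C \<inter> D = {}"
  shows "card (edges_between C D) = card C * card D"
proof -
  have "inj_on (\<lambda>(x, y). {x, y}) (C \<times> D)" using assms(3) by (auto simp: inj_on_def doubleton_eq_iff)
  then show ?thesis unfolding edges_between_def by (simp add: card_image card_cartesian_product)
qed

lemma prob_no_edge_between:
  assumes "finite W" "edges_between C D \<subseteq> W" "finite C" "finite D" "C \<inter> D = {}"
    and "\<And>e. e \<in> edges_between C D \<Longrightarrow> edge_level e = n" and "\<And>n. 0 \<le> J n"
  shows "measure_pmf.prob (Pi_pmf W False (edge_pmf J)) {f. \<forall>x\<in>C. \<forall>y\<in>D. \<not> f {x, y}}
       = exp (- (J n * (real (card C) * real (card D))))"
proof -
  have "{f. \<forall>x\<in>C. \<forall>y\<in>D. \<not> f {x, y}} = {f. \<forall>e\<in>edges_between C D. \<not> f e}"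
    unfolding edges_between_def by auto
  then have "measure_pmf.prob (Pi_pmf W False (edge_pmf J)) {f. \<forall>x\<in>C. \<forall>y\<in>D. \<not> f {x, y}}
      = (\<Prod>e\<in>edges_between C D. 1 - (1 - exp (- J (edge_level e))))"
    using measure_Pi_pmf_all_False[OF assms(1,2), of "\<lambda>e. 1 - exp (- J (edge_level e))"] assms(7)
    by (simp add: edge_pmf_def[abs_def])
  also have "\<dots> = exp (- J n) ^ card (edges_between C D)" using assms(6) by simp
  also have "\<dots> = exp (- (J n * (real (card C) * real (card D))))"
    by (simp add: card_edges_between[OF assms(3-5)] exp_of_nat_mult[symmetric] mult.commute)
  finally show ?thesis .
qed

section \<open>Clusters\<close>

lemma adj_cong:
  assumes "\<And>x. x \<in> B \<Longrightarrow> \<sigma> x = \<sigma>' x" "\<And>e. e \<in> edges_in B \<Longrightarrow> \<omega> e = \<omega>' e"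
  shows "adj B \<sigma> \<omega> = adj B \<sigma>' \<omega>'"
  using assms unfolding adj_def edges_in_def by blast

lemma kmax_size_cong:
  assumes "\<And>x. x \<in> B \<Longrightarrow> \<sigma> x = \<sigma>' x" "\<And>e. e \<in> edges_in B \<Longrightarrow> \<omega> e = \<omega>' e"
  shows "kmax_size B \<sigma> \<omega> = kmax_size B \<sigma>' \<omega>'"
proof -
  have "adj B \<sigma> \<omega> = adj B \<sigma>' \<omega>'" by (rule adj_cong[OF assms])
  then have "cluster B \<sigma> \<omega> = cluster B \<sigma>' \<omega>'" unfolding cluster_def by simp
  then have "{card (cluster B \<sigma> \<omega> x) | x. x \<in> B \<and> \<sigma> x} = {card (cluster B \<sigma>' \<omega>' x) | x. x \<in> B \<and> \<sigma>' x}"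
    using assms(1) by force
  then show ?thesis unfolding kmax_size_def by simp
qed

lemma kmax_size_mask: "kmax_size B (mask B \<sigma>) (mask (edges_in B) \<omega>) = kmax_size B \<sigma> \<omega>"
  by (rule kmax_size_cong) (auto simp: mask_def)

lemma rtrancl_map:
  assumes "\<And>x y. (x,y) \<in> r \<Longrightarrow> (f x, f y) \<in> s" "(a,b) \<in> r\<^sup>*"
  shows "(f a, f b) \<in> s\<^sup>*"
  using assms(2) by induction (auto intro: rtrancl_into_rtrancl assms(1))

lemma adj_image_involution:
  assumes inv: "\<And>x. h (h x) = x"
  shows "(x,y) \<in> adj (h ` B) (\<sigma> \<circ> h) (\<omega> \<circ> image h) \<longleftrightarrow> (h x, h y) \<in> adj B \<sigma> \<omega>"
proof -
  have "x \<in> h ` B \<longleftrightarrow> h x \<in> B" for x by (metis inv image_iff)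
  moreover have "x \<noteq> y \<longleftrightarrow> h x \<noteq> h y" by (metis inv)
  ultimately show ?thesis unfolding adj_def by auto
qed

lemma cluster_image_involution:
  assumes inv: "\<And>x. h (h x) = x"
  shows "cluster (h ` B) (\<sigma> \<circ> h) (\<omega> \<circ> image h) (h x) = h ` cluster B \<sigma> \<omega> x"
proof -
  let ?a = "adj (h ` B) (\<sigma> \<circ> h) (\<omega> \<circ> image h)" and ?b = "adj B \<sigma> \<omega>"
  have ab: "(u,v) \<in> ?a \<Longrightarrow> (h u, h v) \<in> ?b" for u v using adj_image_involution[OF inv] by blast
  have ba: "(u,v) \<in> ?b \<Longrightarrow> (h u, h v) \<in> ?a" for u v
    using adj_image_involution[OF inv, of "h u" "h v"] inv by simp
  have "z \<in> cluster (h ` B) (\<sigma> \<circ> h) (\<omega> \<circ> image h) (h x) \<longleftrightarrow> h z \<in> cluster B \<sigma> \<omega> x" for z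
  proof
    assume "z \<in> cluster (h ` B) (\<sigma> \<circ> h) (\<omega> \<circ> image h) (h x)"
    then have "(h (h x), h z) \<in> ?b\<^sup>*" unfolding cluster_def using rtrancl_map[where f=h, OF ab] by blast
    then show "h z \<in> cluster B \<sigma> \<omega> x" unfolding cluster_def using inv by simp
  next
    assume "h z \<in> cluster B \<sigma> \<omega> x"
    then have "(h x, h (h z)) \<in> ?a\<^sup>*" unfolding cluster_def using rtrancl_map[where f=h, OF ba] by blast
    then show "z \<in> cluster (h ` B) (\<sigma> \<circ> h) (\<omega> \<circ> image h) (h x)" unfolding cluster_def using inv by simp
  qed
  then show ?thesis using inv by (auto simp: image_iff) (metis inv)
qed

lemma kmax_size_image_involution:
  assumes inv: "\<And>x. h (h x) = x"
  shows "kmax_size (h ` B) (\<sigma> \<circ> h) (\<omega> \<circ> image h) = kmax_size B \<sigma> \<omega>"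
proof -
  have "inj h" by (metis inv injI)
  then have card_eq: "card (cluster (h ` B) (\<sigma> \<circ> h) (\<omega> \<circ> image h) (h x)) = card (cluster B \<sigma> \<omega> x)" for x
    by (simp add: cluster_image_involution[OF inv] card_image inj_on_subset)
  have "{card (cluster (h ` B) (\<sigma> \<circ> h) (\<omega> \<circ> image h) y) | y. y \<in> h ` B \<and> (\<sigma> \<circ> h) y}
      = {card (cluster B \<sigma> \<omega> x) | x. x \<in> B \<and> \<sigma> x}"
  proof (intro equalityI subsetI)
    fix n assume "n \<in> {card (cluster (h ` B) (\<sigma> \<circ> h) (\<omega> \<circ> image h) y) | y. y \<in> h ` B \<and> (\<sigma> \<circ> h) y}"
    then obtain x where "x \<in> B" "\<sigma> (h (h x))" "n = card (cluster (h ` B) (\<sigma> \<circ> h) (\<omega> \<circ> image h) (h x))"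
      by auto
    then show "n \<in> {card (cluster B \<sigma> \<omega> x) | x. x \<in> B \<and> \<sigma> x}" using card_eq inv by auto
  next
    fix n assume "n \<in> {card (cluster B \<sigma> \<omega> x) | x. x \<in> B \<and> \<sigma> x}"
    then obtain x where "x \<in> B" "\<sigma> x" "n = card (cluster B \<sigma> \<omega> x)" by auto
    then show "n \<in> {card (cluster (h ` B) (\<sigma> \<circ> h) (\<omega> \<circ> image h) y) | y. y \<in> h ` B \<and> (\<sigma> \<circ> h) y}"
      using card_eq inv by (auto intro!: exI[of _ "h x"])
  qed
  then show ?thesis unfolding kmax_size_def by simp
qed

lemma edge_level_image:
  assumes "\<And>x y i. h x i = h y i \<longleftrightarrow> x i = y i"
  shows "edge_level (h ` e) = edge_level e"
proof -
  have "{i. \<exists>x\<in>h ` e. \<exists>y\<in>h ` e. x i \<noteq> y i} = {i. \<exists>x\<in>e. \<exists>y\<in>e. x i \<noteq> y i}"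
    using assms by blast
  then show ?thesis unfolding edge_level_def by simp
qed

lemma edges_in_image_involution:
  assumes inv: "\<And>x. h (h x) = x"
  shows "edges_in (h ` B) = image h ` edges_in B"
proof (intro equalityI subsetI)
  fix e assume "e \<in> edges_in (h ` B)"
  then obtain x y where xy: "x \<in> B" "y \<in> B" "h x \<noteq> h y" "e = {h x, h y}" unfolding edges_in_def by auto
  then have "x \<noteq> y" by auto
  then have "{x,y} \<in> edges_in B" "e = h ` {x,y}" using xy unfolding edges_in_def by auto
  then show "e \<in> image h ` edges_in B" by blast
next
  fix e assume "e \<in> image h ` edges_in B"
  then obtain x y where "x \<in> B" "y \<in> B" "x \<noteq> y" "e = h ` {x, y}" unfolding edges_in_def by auto
  moreover have "h x \<noteq> h y" using \<open>x \<noteq> y\<close> by (metis inv)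
  ultimately show "e \<in> edges_in (h ` B)" unfolding edges_in_def by auto
qed

lemma config_pmf_image_involution:
  assumes fin: "finite B" and inv: "\<And>x. h (h x) = x" and digits: "\<And>x y i. h x i = h y i \<longleftrightarrow> x i = y i"
  shows "config_pmf q J (h ` B) = map_pmf (\<lambda>(\<sigma>,\<omega>). (\<sigma> \<circ> h, \<omega> \<circ> image h)) (config_pmf q J B)"
proof -
  have V: "Pi_pmf (h ` B) False (\<lambda>_. bernoulli_pmf q) = map_pmf (\<lambda>g. g \<circ> h) (Pi_pmf B False (\<lambda>_. bernoulli_pmf q))"
    by (rule Pi_pmf_image_involution[OF fin inv]) simp
  have "image h (image h e) = e" for e using inv by (simp add: image_image)
  then have E: "Pi_pmf (image h ` edges_in B) False (edge_pmf J)
      = map_pmf (\<lambda>g. g \<circ> image h) (Pi_pmf (edges_in B) False (edge_pmf J))"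
    by (rule Pi_pmf_image_involution[OF finite_edges_in[OF fin]])
      (simp add: edge_pmf_def edge_level_image[of h, OF digits])
  show ?thesis unfolding config_pmf_eq edges_in_image_involution[OF inv] V E map_pair[symmetric] by simp
qed

lemma sym_adj: "sym (adj B \<sigma> \<omega>)"
  unfolding adj_def sym_def by (auto simp: insert_commute)

lemma adj_mono: "B \<subseteq> A \<Longrightarrow> adj B \<sigma> \<omega> \<subseteq> adj A \<sigma> \<omega>"
  unfolding adj_def by auto

lemma cluster_subset:
  assumes "x \<in> B" shows "cluster B \<sigma> \<omega> x \<subseteq> B"
proof
  fix y assume "y \<in> cluster B \<sigma> \<omega> x"
  then have "(x,y) \<in> (adj B \<sigma> \<omega>)\<^sup>*" unfolding cluster_def by simp
  then show "y \<in> B" using assms by induction (auto simp: adj_def)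
qed

lemma cluster_open:
  assumes "\<sigma> x" "y \<in> cluster B \<sigma> \<omega> x" shows "\<sigma> y"
proof -
  have "(x,y) \<in> (adj B \<sigma> \<omega>)\<^sup>*" using assms(2) unfolding cluster_def by simp
  then show ?thesis using assms(1) by induction (auto simp: adj_def)
qed

lemma cluster_connected:
  assumes "B \<subseteq> A" "y \<in> cluster B \<sigma> \<omega> x" "z \<in> cluster B \<sigma> \<omega> x"
  shows "(y,z) \<in> (adj A \<sigma> \<omega>)\<^sup>*"
proof -
  have "(x,y) \<in> (adj A \<sigma> \<omega>)\<^sup>*" "(x,z) \<in> (adj A \<sigma> \<omega>)\<^sup>*"
    using assms rtrancl_mono[OF adj_mono[OF assms(1)]] unfolding cluster_def by auto
  then show ?thesis using symD[OF sym_rtrancl[OF sym_adj]] by (meson rtrancl_trans)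
qed

lemma card_cluster_le_kmax_size:
  "finite B \<Longrightarrow> x \<in> B \<Longrightarrow> \<sigma> x \<Longrightarrow> card (cluster B \<sigma> \<omega> x) \<le> kmax_size B \<sigma> \<omega>"
  unfolding kmax_size_def by (intro Max_ge) auto

lemma kmax_size_attained:
  assumes "finite B" "0 < kmax_size B \<sigma> \<omega>"
  obtains x where "x \<in> B" "\<sigma> x" "card (cluster B \<sigma> \<omega> x) = kmax_size B \<sigma> \<omega>"
proof -
  let ?S = "{card (cluster B \<sigma> \<omega> x) | x. x \<in> B \<and> \<sigma> x}"
  have "kmax_size B \<sigma> \<omega> \<in> insert 0 ?S" unfolding kmax_size_def using assms(1) by (intro Max_in) auto
  then show ?thesis using assms(2) that by auto
qed

section \<open>Blocks of the hierarchical lattice\<close>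

definition box :: "nat \<Rightarrow> nat set \<Rightarrow> (nat \<Rightarrow> nat) \<Rightarrow> (nat \<Rightarrow> nat) set" where
  "box L S v = {x. (\<forall>i\<in>S. x i < L) \<and> (\<forall>i. i \<notin> S \<longrightarrow> x i = v i)}"

lemma bij_betw_restrict_box: "bij_betw (\<lambda>x. restrict x S) (box L S v) (PiE S (\<lambda>_. {..<L}))"
proof (rule bij_betwI[where g = "\<lambda>f i. if i \<in> S then f i else v i"])
  show "(\<lambda>x. restrict x S) \<in> box L S v \<rightarrow> PiE S (\<lambda>_. {..<L})" unfolding box_def by auto
  show "(\<lambda>f i. if i \<in> S then f i else v i) \<in> PiE S (\<lambda>_. {..<L}) \<rightarrow> box L S v" unfolding box_def by auto
  show "(\<lambda>i. if i \<in> S then restrict x S i else v i) = x" if "x \<in> box L S v" for x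
    using that unfolding box_def by (auto simp: fun_eq_iff)
  show "restrict (\<lambda>i. if i \<in> S then y i else v i) S = y" if "y \<in> PiE S (\<lambda>_. {..<L})" for y
    using that by (auto simp: fun_eq_iff PiE_def extensional_def)
qed

lemma card_box: "finite S \<Longrightarrow> card (box L S v) = L ^ card S"
  using bij_betw_same_card[OF bij_betw_restrict_box] by (simp add: card_PiE)

lemma finite_box: "finite S \<Longrightarrow> finite (box L S v)"
  by (rule bij_betw_finite[OF bij_betw_restrict_box, THEN iffD2]) (simp add: finite_PiE)

lemma box_mono:
  assumes "S \<subseteq> T" "\<And>i. i \<in> T \<Longrightarrow> v i < L"
  shows "box L S v \<subseteq> box L T v"
proof
  fix x assume x: "x \<in> box L S v"
  then have "x i < L" if "i \<in> T" for i using assms that unfolding box_def by (cases "i \<in> S") auto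
  then show "x \<in> box L T v" using x assms(1) unfolding box_def by auto
qed

lemma box_Int_box:
  assumes "\<And>i. i \<notin> S \<Longrightarrow> u i = v i" "\<And>i. v i < L"
  shows "box L S u \<inter> box L T v = box L (S \<inter> T) v"
proof (intro equalityI subsetI)
  fix x assume "x \<in> box L S u \<inter> box L T v"
  then show "x \<in> box L (S \<inter> T) v" using assms(1) unfolding box_def by auto
next
  fix x assume x: "x \<in> box L (S \<inter> T) v"
  have "x i < L" for i using x assms(2)[of i] unfolding box_def by (cases "i \<in> S \<inter> T") auto
  then show "x \<in> box L S u \<inter> box L T v" using x assms(1) unfolding box_def by auto
qed

lemma zero_in_hier: "0 < L \<Longrightarrow> (\<lambda>_. 0) \<in> hier L"
  unfolding hier_def by simp

lemma block_eq_box: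
  assumes "v \<in> hier L"
  shows "block L k v = box L {1..k} v"
proof -
  have v: "v 0 = 0" "\<And>i. v i < L" "finite {i. v i \<noteq> 0}" using assms unfolding hier_def by auto
  show ?thesis
  proof (intro equalityI subsetI)
    fix x assume x: "x \<in> block L k v"
    have "x i = v i" if "i \<notin> {1..k}" for i
      using x v(1) that unfolding block_def hier_def by (cases "i = 0") auto
    then show "x \<in> box L {1..k} v" using x unfolding block_def hier_def box_def by auto
  next
    fix x assume x: "x \<in> box L {1..k} v"
    have "x i < L" for i using x v(2)[of i] unfolding box_def by (cases "i \<in> {1..k}") auto
    moreover have "finite {i. x i \<noteq> 0}"
      using x by (intro finite_subset[OF _ finite_UnI[OF finite_atLeastAtMost v(3)]]) (auto simp: box_def)
    ultimately show "x \<in> block L k v" using x v(1) unfolding block_def hier_def box_def by auto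
  qed
qed

lemma card_block: "v \<in> hier L \<Longrightarrow> card (block L k v) = L ^ k"
  by (simp add: block_eq_box card_box)

lemma finite_block: "v \<in> hier L \<Longrightarrow> finite (block L k v)"
  by (simp add: block_eq_box finite_box)

lemma self_in_block: "v \<in> hier L \<Longrightarrow> v \<in> block L k v"
  unfolding block_def by simp

lemma block_mono: "u \<in> block L k' v \<Longrightarrow> k \<le> k' \<Longrightarrow> block L k u \<subseteq> block L k' v"
  unfolding block_def by auto

lemma block_subset_hier: "block L k v \<subseteq> hier L"
  unfolding block_def by auto

(* An involution preserving the levels of all edges that maps the R-block of 0 onto that of u;
   it plays the role of the translation by u. *)
definition swap_digits :: "nat \<Rightarrow> (nat \<Rightarrow> nat) \<Rightarrow> (nat \<Rightarrow> nat) \<Rightarrow> nat \<Rightarrow> nat" where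
  "swap_digits R u x = (\<lambda>i. if R < i then (if x i = 0 then u i else if x i = u i then 0 else x i) else x i)"

lemma swap_digits_swap_digits: "swap_digits R u (swap_digits R u x) = x"
  unfolding swap_digits_def by (auto simp: fun_eq_iff)

lemma swap_digits_eq_iff: "swap_digits R u x i = swap_digits R u y i \<longleftrightarrow> x i = y i"
  unfolding swap_digits_def by auto

lemma swap_digits_hier:
  assumes u: "u \<in> hier L" and x: "x \<in> hier L"
  shows "swap_digits R u x \<in> hier L"
proof -
  have "{i. swap_digits R u x i \<noteq> 0} \<subseteq> {i. x i \<noteq> 0} \<union> {i. u i \<noteq> 0}"
    unfolding swap_digits_def by auto
  moreover have "finite {i. x i \<noteq> 0}" "finite {i. u i \<noteq> 0}" using u x unfolding hier_def by auto
  ultimately have "finite {i. swap_digits R u x i \<noteq> 0}" by (metis finite_UnI finite_subset)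
  moreover have "swap_digits R u x i < L" for i
    using u x unfolding hier_def swap_digits_def by auto
  moreover have "swap_digits R u x 0 = 0"
    using x unfolding hier_def swap_digits_def by auto
  ultimately show ?thesis unfolding hier_def by blast
qed

lemma swap_digits_block:
  assumes u: "u \<in> hier L"
  shows "swap_digits R u ` block L R (\<lambda>_. 0) = block L R u"
proof -
  have to_u: "swap_digits R u x \<in> block L R u" if "x \<in> block L R (\<lambda>_. 0)" for x
    using that swap_digits_hier[OF u] unfolding block_def by (auto simp: swap_digits_def)
  have to_0: "swap_digits R u y \<in> block L R (\<lambda>_. 0)" if "y \<in> block L R u" for y
    using that swap_digits_hier[OF u] unfolding block_def by (auto simp: swap_digits_def)
  show ?thesis using to_u to_0 swap_digits_swap_digits by (metis image_eqI image_subsetI subsetI subset_antisym)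
qed

lemma edge_level_siblings:
  assumes "x \<in> block L j v" "y \<in> block L j w" "v (Suc j) \<noteq> w (Suc j)" "\<And>i. Suc j < i \<Longrightarrow> v i = w i"
  shows "edge_level {x, y} = Suc j"
proof -
  have "{i. \<exists>a\<in>{x,y}. \<exists>b\<in>{x,y}. a i \<noteq> b i} = {i. x i \<noteq> y i}" by auto
  moreover have "{i. x i \<noteq> y i} \<subseteq> {..Suc j}"
  proof
    fix i assume "i \<in> {i. x i \<noteq> y i}"
    moreover have "Suc j < i \<Longrightarrow> x i = y i" using assms unfolding block_def by auto
    ultimately show "i \<in> {..Suc j}" by (cases "Suc j < i") auto
  qed
  moreover have "Suc j \<in> {i. x i \<noteq> y i}" using assms unfolding block_def by auto
  ultimately show ?thesis unfolding edge_level_def by (intro Max_eqI) (auto intro: finite_subset)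
qed

lemma sum_powers_le:
  assumes "2 \<le> (L::nat)" shows "(\<Sum>i<r. L ^ i) \<le> L ^ r"
proof (induction r)
  case (Suc r)
  have "(\<Sum>i<Suc r. L ^ i) \<le> 2 * L ^ r" using Suc by simp
  also have "\<dots> \<le> L ^ Suc r" using assms by simp
  finally show ?case .
qed simp

lemma sum_level_counts_le:
  assumes "2 \<le> (L::nat)"
  shows "(\<Sum>j\<in>{R..<R+r}. L ^ (R + r - j) * L) \<le> L ^ (r + 2)"
proof -
  have "(\<Sum>j\<in>{R..<R+r}. L ^ (R + r - j) * L) = (\<Sum>i\<in>{0..<r}. L ^ (R + r - (i + R)) * L)"
    using sum.shift_bounds_nat_ivl[of "\<lambda>j. L ^ (R + r - j) * L" 0 R r] by (simp add: add.commute)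
  also have "\<dots> = (\<Sum>i<r. (\<lambda>i. L ^ Suc i * L) (r - Suc i))"
    by (intro sum.cong) (auto simp: Suc_diff_Suc)
  also have "\<dots> = (\<Sum>i<r. L ^ Suc i * L)" by (rule sum.nat_diff_reindex)
  also have "\<dots> = L^2 * (\<Sum>i<r. L ^ i)" by (simp add: sum_distrib_left power2_eq_square mult_ac)
  also have "\<dots> \<le> L^2 * L ^ r" using sum_powers_le[OF assms] by simp
  also have "\<dots> = L ^ (r + 2)" by (simp only: power_add mult.commute)
  finally show ?thesis .
qed

section \<open>One renormalization step\<close>

locale renormalization =
  fixes L R r :: nat and t :: real
  assumes L_ge_2: "2 \<le> L" and t_pos: "0 < t"
begin

definition big :: "(nat \<Rightarrow> nat) set" where
  "big = block L (R + r) (\<lambda>_. 0)"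

(* The j-blocks inside big are the blocks block L j v with v \<in> centers j. *)
definition centers :: "nat \<Rightarrow> (nat \<Rightarrow> nat) set" where
  "centers j = box L {Suc j..R + r} (\<lambda>_. 0)"

definition trunc :: "nat \<Rightarrow> (nat \<Rightarrow> nat) \<Rightarrow> nat \<Rightarrow> nat" where
  "trunc j x = (\<lambda>i. if i \<le> j then 0 else x i)"

definition subblock :: "(nat \<Rightarrow> nat) \<Rightarrow> (nat \<Rightarrow> nat) set" where
  "subblock u = block L R u"

definition good :: "(nat \<Rightarrow> nat) \<Rightarrow> ((nat \<Rightarrow> nat) \<Rightarrow> bool) \<Rightarrow> ((nat \<Rightarrow> nat) set \<Rightarrow> bool) \<Rightarrow> bool" where
  "good u \<sigma> \<omega> \<longleftrightarrow> t * real (card (subblock u)) \<le> real (kmax_size (subblock u) \<sigma> \<omega>)"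

(* For t > 1/2 the cluster of the root is the unique largest cluster K_max of the paper. *)
definition root :: "(nat \<Rightarrow> nat) \<Rightarrow> ((nat \<Rightarrow> nat) \<Rightarrow> bool) \<Rightarrow> ((nat \<Rightarrow> nat) set \<Rightarrow> bool) \<Rightarrow> nat \<Rightarrow> nat" where
  "root u \<sigma> \<omega> = (SOME x. x \<in> subblock u \<and> \<sigma> x
      \<and> t * real (card (subblock u)) \<le> real (card (cluster (subblock u) \<sigma> \<omega> x)))"

definition giant :: "(nat \<Rightarrow> nat) \<Rightarrow> ((nat \<Rightarrow> nat) \<Rightarrow> bool) \<Rightarrow> ((nat \<Rightarrow> nat) set \<Rightarrow> bool) \<Rightarrow> (nat \<Rightarrow> nat) set" where
  "giant u \<sigma> \<omega> = cluster (subblock u) \<sigma> \<omega> (root u \<sigma> \<omega>)"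

definition good_centers :: "(nat \<Rightarrow> nat) set \<Rightarrow> ((nat \<Rightarrow> nat) \<Rightarrow> bool) \<Rightarrow> ((nat \<Rightarrow> nat) set \<Rightarrow> bool)
    \<Rightarrow> (nat \<Rightarrow> nat) set" where
  "good_centers D \<sigma> \<omega> = {u \<in> centers R. u \<in> D \<and> good u \<sigma> \<omega>}"

definition core :: "(nat \<Rightarrow> nat) set \<Rightarrow> ((nat \<Rightarrow> nat) \<Rightarrow> bool) \<Rightarrow> ((nat \<Rightarrow> nat) set \<Rightarrow> bool) \<Rightarrow> (nat \<Rightarrow> nat) set" where
  "core D \<sigma> \<omega> = (\<Union>u\<in>good_centers D \<sigma> \<omega>. giant u \<sigma> \<omega>)"

lemma L_pos: "0 < L"
  using L_ge_2 by simp

lemma big_eq_box: "big = box L {1..R + r} (\<lambda>_. 0)"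
  unfolding big_def by (rule block_eq_box[OF zero_in_hier[OF L_pos]])

lemma big_subset_hier: "big \<subseteq> hier L"
  unfolding big_def by (rule block_subset_hier)

lemma finite_big: "finite big"
  unfolding big_eq_box by (simp add: finite_box)

lemma card_big: "card big = L ^ (R + r)"
  unfolding big_eq_box by (simp add: card_box)

lemma centers_subset_big: "centers j \<subseteq> big"
  unfolding centers_def big_eq_box using L_pos by (intro box_mono) auto

lemma centers_subset_hier: "centers j \<subseteq> hier L"
  using centers_subset_big big_subset_hier by blast

lemma finite_centers: "finite (centers j)"
  unfolding centers_def by (simp add: finite_box)

lemma card_centers: "card (centers j) = L ^ (R + r - j)"
  unfolding centers_def by (simp add: card_box)

lemma centers_Int_block:
  assumes "R \<le> j" "j \<le> R + r" "v \<in> centers j"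
  shows "centers R \<inter> block L j v = box L {Suc R..j} v"
proof -
  have v: "v \<in> hier L" using assms(3) centers_subset_hier by blast
  have "centers R \<inter> block L j v = box L ({Suc R..R + r} \<inter> {1..j}) v"
    unfolding centers_def block_eq_box[OF v]
  proof (rule box_Int_box)
    show "0 = v i" if "i \<notin> {Suc R..R + r}" for i
      using assms(1,3) that unfolding centers_def box_def by auto
    show "v i < L" for i using v unfolding hier_def by auto
  qed
  also have "{Suc R..R + r} \<inter> {1..j} = {Suc R..j}" using assms(2) by auto
  finally show ?thesis .
qed

lemma card_centers_Int_block:
  "R \<le> j \<Longrightarrow> j \<le> R + r \<Longrightarrow> v \<in> centers j \<Longrightarrow> card (centers R \<inter> block L j v) = L ^ (j - R)"
  by (simp add: centers_Int_block card_box)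

lemma trunc_in_centers: "x \<in> big \<Longrightarrow> trunc j x \<in> centers j"
  unfolding big_eq_box centers_def box_def trunc_def by auto

lemma in_block_trunc: "x \<in> hier L \<Longrightarrow> x \<in> block L j (trunc j x)"
  unfolding block_def trunc_def by auto

lemma trunc_eq: "v \<in> centers j \<Longrightarrow> x \<in> block L j v \<Longrightarrow> trunc j x = v"
  unfolding centers_def box_def block_def trunc_def by (auto simp: fun_eq_iff)

lemma centers_upd: "v \<in> centers j \<Longrightarrow> j < R + r \<Longrightarrow> c < L \<Longrightarrow> v(Suc j := c) \<in> centers j"
  unfolding centers_def box_def by auto

lemma siblings_eq_upd:
  assumes "a \<in> centers j" "b \<in> centers j" "a \<in> block L (Suc j) v" "b \<in> block L (Suc j) v"
  shows "b = a(Suc j := b (Suc j))"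
proof -
  have "b i = a i" if "i \<noteq> Suc j" for i
  proof (cases "i < Suc j")
    case True
    then show ?thesis using assms(1,2) unfolding centers_def box_def by auto
  next
    case False
    then show ?thesis using assms(3,4) that unfolding block_def by auto
  qed
  then show ?thesis by (auto simp: fun_eq_iff)
qed

lemma subblock_subset_block: "u \<in> block L j v \<Longrightarrow> R \<le> j \<Longrightarrow> subblock u \<subseteq> block L j v"
  unfolding subblock_def by (rule block_mono)

lemma subblock_subset_big: "u \<in> big \<Longrightarrow> subblock u \<subseteq> big"
  unfolding big_def by (rule subblock_subset_block) auto

lemma subblock_disjoint:
  assumes "u \<in> centers R" "u' \<in> centers R" "u \<noteq> u'"
  shows "subblock u \<inter> subblock u' = {}"
  using trunc_eq[OF assms(1)] trunc_eq[OF assms(2)] assms(3) unfolding subblock_def by blast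

lemma finite_subblock: "u \<in> big \<Longrightarrow> finite (subblock u)"
  unfolding subblock_def using big_subset_hier finite_block by auto

lemma card_subblock: "u \<in> big \<Longrightarrow> card (subblock u) = L ^ R"
  unfolding subblock_def using big_subset_hier card_block by auto

lemma root_spec:
  assumes u: "u \<in> big" and g: "good u \<sigma> \<omega>"
  shows "root u \<sigma> \<omega> \<in> subblock u \<and> \<sigma> (root u \<sigma> \<omega>)
    \<and> t * real (card (subblock u)) \<le> real (card (giant u \<sigma> \<omega>))"
proof -
  have "0 < t * real (card (subblock u))" using t_pos card_subblock[OF u] L_pos by simp
  then have "0 < kmax_size (subblock u) \<sigma> \<omega>" using g unfolding good_def by linarith
  then obtain x where "x \<in> subblock u" "\<sigma> x" "card (cluster (subblock u) \<sigma> \<omega> x) = kmax_size (subblock u) \<sigma> \<omega>"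
    by (rule kmax_size_attained[OF finite_subblock[OF u]])
  then have "\<exists>x. x \<in> subblock u \<and> \<sigma> x \<and> t * real (card (subblock u)) \<le> real (card (cluster (subblock u) \<sigma> \<omega> x))"
    using g unfolding good_def by auto
  then show ?thesis unfolding root_def giant_def by (rule someI_ex)
qed

lemma giant_subset_subblock:
  assumes "u \<in> big" "good u \<sigma> \<omega>" shows "giant u \<sigma> \<omega> \<subseteq> subblock u"
  using cluster_subset[of "root u \<sigma> \<omega>" "subblock u" \<sigma> \<omega>] root_spec[OF assms]
  unfolding giant_def by simp

lemma giant_open:
  assumes "u \<in> big" "good u \<sigma> \<omega>" "y \<in> giant u \<sigma> \<omega>" shows "\<sigma> y"
  using cluster_open[of \<sigma> "root u \<sigma> \<omega>" y] root_spec[OF assms(1,2)] assms(3)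
  unfolding giant_def by simp

lemma finite_giant: "u \<in> big \<Longrightarrow> good u \<sigma> \<omega> \<Longrightarrow> finite (giant u \<sigma> \<omega>)"
  using giant_subset_subblock finite_subblock finite_subset by metis

lemma card_giant_ge: "u \<in> big \<Longrightarrow> good u \<sigma> \<omega> \<Longrightarrow> t * real (L ^ R) \<le> real (card (giant u \<sigma> \<omega>))"
  using root_spec card_subblock by simp

lemma giant_connected: "u \<in> big \<Longrightarrow> x \<in> giant u \<sigma> \<omega> \<Longrightarrow> y \<in> giant u \<sigma> \<omega> \<Longrightarrow> (x,y) \<in> (adj big \<sigma> \<omega>)\<^sup>*"
  unfolding giant_def by (rule cluster_connected[OF subblock_subset_big])

lemma core_memE:
  assumes "x \<in> core D \<sigma> \<omega>"
  obtains u where "u \<in> centers R" "u \<in> D" "good u \<sigma> \<omega>" "x \<in> giant u \<sigma> \<omega>"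
  using assms unfolding core_def good_centers_def by blast

lemma core_memI: "u \<in> centers R \<Longrightarrow> u \<in> D \<Longrightarrow> good u \<sigma> \<omega> \<Longrightarrow> x \<in> giant u \<sigma> \<omega> \<Longrightarrow> x \<in> core D \<sigma> \<omega>"
  unfolding core_def good_centers_def by blast

lemma core_subset_block: "R \<le> j \<Longrightarrow> core (block L j v) \<sigma> \<omega> \<subseteq> block L j v"
  by (smt (verit) centers_subset_big core_memE giant_subset_subblock subblock_subset_block subsetD subsetI)

lemma core_subset_big: "core D \<sigma> \<omega> \<subseteq> big"
  by (metis centers_subset_big core_memE giant_subset_subblock subblock_subset_big subsetD subsetI)

lemma core_open: "x \<in> core D \<sigma> \<omega> \<Longrightarrow> \<sigma> x"
  by (metis centers_subset_big core_memE giant_open subsetD)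

lemma card_core_ge:
  "real (card (good_centers D \<sigma> \<omega>)) * (t * real (L ^ R)) \<le> real (card (core D \<sigma> \<omega>))"
proof -
  let ?G = "good_centers D \<sigma> \<omega>"
  have fin: "finite ?G" unfolding good_centers_def using finite_centers by simp
  have big: "u \<in> big" "good u \<sigma> \<omega>" if "u \<in> ?G" for u
    using that centers_subset_big unfolding good_centers_def by auto
  have "card (core D \<sigma> \<omega>) = (\<Sum>u\<in>?G. card (giant u \<sigma> \<omega>))"
    unfolding core_def
  proof (rule card_UN_disjoint[OF fin])
    show "\<forall>u\<in>?G. finite (giant u \<sigma> \<omega>)" using finite_giant big by blast
    show "\<forall>u\<in>?G. \<forall>u'\<in>?G. u \<noteq> u' \<longrightarrow> giant u \<sigma> \<omega> \<inter> giant u' \<sigma> \<omega> = {}"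
      using subblock_disjoint giant_subset_subblock big unfolding good_centers_def by blast
  qed
  then have "real (card (core D \<sigma> \<omega>)) = (\<Sum>u\<in>?G. real (card (giant u \<sigma> \<omega>)))" by simp
  also have "\<dots> \<ge> (\<Sum>u\<in>?G. t * real (L ^ R))"
    using card_giant_ge big by (intro sum_mono) auto
  finally show ?thesis by simp
qed

definition at_most_one_bad :: "((nat \<Rightarrow> nat) \<Rightarrow> bool) \<Rightarrow> ((nat \<Rightarrow> nat) set \<Rightarrow> bool) \<Rightarrow> bool" where
  "at_most_one_bad \<sigma> \<omega> \<longleftrightarrow> (\<forall>u\<in>centers R. \<forall>u'\<in>centers R. \<not> good u \<sigma> \<omega> \<and> \<not> good u' \<sigma> \<omega> \<longrightarrow> u = u')"

lemma card_good_centers_ge: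
  assumes "at_most_one_bad \<sigma> \<omega>"
  shows "card (centers R \<inter> D) \<le> card (good_centers D \<sigma> \<omega>) + 1"
proof -
  let ?S = "centers R \<inter> D" and ?G = "good_centers D \<sigma> \<omega>"
  have fin: "finite ?S" using finite_centers by simp
  have "card (?S - ?G) \<le> 1"
    using assms fin unfolding at_most_one_bad_def good_centers_def by (auto simp: card_le_Suc0_iff_eq)
  moreover have "card ?S \<le> card (?G \<union> (?S - ?G))"
    using finite_centers unfolding good_centers_def by (intro card_mono) auto
  moreover have "card (?G \<union> (?S - ?G)) \<le> card ?G + card (?S - ?G)" by (rule card_Un_le)
  ultimately show ?thesis by linarith
qed

lemma card_core_block_ge:
  assumes one_bad: "at_most_one_bad \<sigma> \<omega>" and j: "R \<le> j" "j \<le> R + r" and v: "v \<in> centers j"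
    and nonempty: "core (block L j v) \<sigma> \<omega> \<noteq> {}"
  shows "t / 2 * real L ^ j \<le> real (card (core (block L j v) \<sigma> \<omega>))"
proof -
  let ?G = "good_centers (block L j v) \<sigma> \<omega>"
  have "L ^ (j - R) \<le> card ?G + 1"
    using card_good_centers_ge[OF one_bad, of "block L j v"] card_centers_Int_block[OF j v] by simp
  moreover have "?G \<noteq> {}" using nonempty unfolding core_def by blast
  then have "1 \<le> card ?G" using finite_centers unfolding good_centers_def by (simp add: Suc_le_eq card_gt_0_iff)
  ultimately have "L ^ (j - R) \<le> 2 * card ?G" by linarith
  then have "real L ^ (j - R) \<le> 2 * real (card ?G)"
    by (metis of_nat_le_iff of_nat_mult of_nat_numeral of_nat_power)
  have "t / 2 * real L ^ j = t / 2 * real L ^ (j - R) * real L ^ R"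
    using j by (simp add: power_add[symmetric])
  also have "\<dots> \<le> t / 2 * (2 * real (card ?G)) * real L ^ R"
    using \<open>real L ^ (j - R) \<le> 2 * real (card ?G)\<close> t_pos by (intro mult_right_mono mult_left_mono) auto
  also have "\<dots> = real (card ?G) * (t * real (L ^ R))" by simp
  also have "\<dots> \<le> real (card (core (block L j v) \<sigma> \<omega>))" by (rule card_core_ge)
  finally show ?thesis .
qed

definition disconnected_siblings ::
    "nat \<Rightarrow> (nat \<Rightarrow> nat) \<Rightarrow> nat \<Rightarrow> ((nat \<Rightarrow> nat) \<Rightarrow> bool) \<Rightarrow> ((nat \<Rightarrow> nat) set \<Rightarrow> bool) \<Rightarrow> bool" where
  "disconnected_siblings j v c \<sigma> \<omega> \<longleftrightarrow>
     t / 2 * real L ^ j \<le> real (card (core (block L j v) \<sigma> \<omega>))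
     \<and> t / 2 * real L ^ j \<le> real (card (core (block L j (v(Suc j := c))) \<sigma> \<omega>))
     \<and> (\<forall>x\<in>core (block L j v) \<sigma> \<omega>. \<forall>y\<in>core (block L j (v(Suc j := c))) \<sigma> \<omega>. \<not> \<omega> {x, y})"

definition sibling_triples :: "(nat \<times> (nat \<Rightarrow> nat) \<times> nat) set" where
  "sibling_triples = {(j, v, c). R \<le> j \<and> j < R + r \<and> v \<in> centers j \<and> c < L \<and> c \<noteq> v (Suc j)}"

definition no_disconnected_siblings :: "((nat \<Rightarrow> nat) \<Rightarrow> bool) \<Rightarrow> ((nat \<Rightarrow> nat) set \<Rightarrow> bool) \<Rightarrow> bool" where
  "no_disconnected_siblings \<sigma> \<omega> \<longleftrightarrow> (\<forall>(j, v, c)\<in>sibling_triples. \<not> disconnected_siblings j v c \<sigma> \<omega>)"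

lemma open_edge_between_cores:
  assumes one_bad: "at_most_one_bad \<sigma> \<omega>" and linked: "no_disconnected_siblings \<sigma> \<omega>"
    and jac: "(j, a, c) \<in> sibling_triples"
    and x: "x \<in> core (block L j a) \<sigma> \<omega>" and y: "y \<in> core (block L j (a(Suc j := c))) \<sigma> \<omega>"
  obtains x' y' where "x' \<in> core (block L j a) \<sigma> \<omega>" "y' \<in> core (block L j (a(Suc j := c))) \<sigma> \<omega>"
    "(x', y') \<in> adj big \<sigma> \<omega>"
proof -
  define b where "b = a(Suc j := c)"
  from jac have j: "R \<le> j" "j \<le> R + r" and a: "a \<in> centers j" and c: "c \<noteq> a (Suc j)"
    and b: "b \<in> centers j"
    unfolding sibling_triples_def b_def by (auto intro: centers_upd)
  have "t / 2 * real L ^ j \<le> real (card (core (block L j a) \<sigma> \<omega>))"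
       "t / 2 * real L ^ j \<le> real (card (core (block L j b) \<sigma> \<omega>))"
    using card_core_block_ge[OF one_bad j a] card_core_block_ge[OF one_bad j b] x y unfolding b_def by auto
  then obtain x' y' where x'y': "x' \<in> core (block L j a) \<sigma> \<omega>" "y' \<in> core (block L j b) \<sigma> \<omega>" "\<omega> {x', y'}"
    using linked jac unfolding no_disconnected_siblings_def disconnected_siblings_def b_def by fastforce
  have "x' \<noteq> y'"
  proof
    assume "x' = y'"
    then have "a = b" using trunc_eq[OF a] trunc_eq[OF b] core_subset_block[OF j(1)] x'y'(1,2) by blast
    then show False using c unfolding b_def by (metis fun_upd_same)
  qed
  moreover have "x' \<in> big" "y' \<in> big" "\<sigma> x'" "\<sigma> y'" using x'y' core_subset_big core_open by auto
  ultimately have "(x', y') \<in> adj big \<sigma> \<omega>" unfolding adj_def using x'y'(3) by simp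
  then show ?thesis by (rule that[OF x'y'(1) x'y'(2)[unfolded b_def]])
qed

lemma core_subset_giant:
  assumes v: "v \<in> centers R" shows "core (block L R v) \<sigma> \<omega> \<subseteq> giant v \<sigma> \<omega>"
proof
  fix x assume "x \<in> core (block L R v) \<sigma> \<omega>"
  then obtain u where u: "u \<in> centers R" "u \<in> block L R v" "x \<in> giant u \<sigma> \<omega>" by (rule core_memE)
  have "u \<in> hier L" using u(1) centers_subset_hier by blast
  then have "trunc R u = u" by (rule trunc_eq[OF u(1) self_in_block])
  moreover have "trunc R u = v" by (rule trunc_eq[OF v u(2)])
  ultimately show "x \<in> giant v \<sigma> \<omega>" using u(3) by simp
qed

lemma core_Suc_memE:
  assumes "x \<in> core (block L (Suc j) v) \<sigma> \<omega>"
  obtains a where "a \<in> centers j" "a \<in> block L (Suc j) v" "x \<in> core (block L j a) \<sigma> \<omega>"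
proof -
  obtain u where u: "u \<in> centers R" "u \<in> block L (Suc j) v" "good u \<sigma> \<omega>" "x \<in> giant u \<sigma> \<omega>"
    using assms by (rule core_memE)
  have "u \<in> big" using u(1) centers_subset_big by blast
  then have a: "trunc j u \<in> centers j" "u \<in> block L j (trunc j u)"
    using trunc_in_centers in_block_trunc big_subset_hier by auto
  moreover have "trunc j u \<in> block L (Suc j) v"
    using u(2) a(1) centers_subset_hier unfolding block_def trunc_def by auto
  moreover have "x \<in> core (block L j (trunc j u)) \<sigma> \<omega>" using core_memI u a(2) by blast
  ultimately show ?thesis using that by blast
qed

lemma core_connected:
  assumes one_bad: "at_most_one_bad \<sigma> \<omega>" and linked: "no_disconnected_siblings \<sigma> \<omega>"
  shows "d \<le> r \<Longrightarrow> v \<in> centers (R + d) \<Longrightarrow> x \<in> core (block L (R + d) v) \<sigma> \<omega>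
    \<Longrightarrow> y \<in> core (block L (R + d) v) \<sigma> \<omega> \<Longrightarrow> (x,y) \<in> (adj big \<sigma> \<omega>)\<^sup>*"
proof (induction d arbitrary: v x y)
  case 0
  then have "x \<in> giant v \<sigma> \<omega>" "y \<in> giant v \<sigma> \<omega>" "v \<in> big"
    using core_subset_giant[of v] centers_subset_big[of R] by auto
  then show ?case by (intro giant_connected)
next
  case (Suc d)
  define j where "j = R + d"
  have IH: "\<And>w p q. w \<in> centers j \<Longrightarrow> p \<in> core (block L j w) \<sigma> \<omega> \<Longrightarrow> q \<in> core (block L j w) \<sigma> \<omega>
      \<Longrightarrow> (p,q) \<in> (adj big \<sigma> \<omega>)\<^sup>*"
    using Suc(1,2) unfolding j_def by auto
  have "x \<in> core (block L (Suc j) v) \<sigma> \<omega>" using Suc(4) unfolding j_def by simp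
  then obtain a where a: "a \<in> centers j" "a \<in> block L (Suc j) v" "x \<in> core (block L j a) \<sigma> \<omega>"
    by (rule core_Suc_memE)
  have "y \<in> core (block L (Suc j) v) \<sigma> \<omega>" using Suc(5) unfolding j_def by simp
  then obtain b where b: "b \<in> centers j" "b \<in> block L (Suc j) v" "y \<in> core (block L j b) \<sigma> \<omega>"
    by (rule core_Suc_memE)
  show ?case
  proof (cases "a = b")
    case True
    then show ?thesis using IH[OF a(1,3)] b(3) by simp
  next
    case False
    define c where "c = b (Suc j)"
    have bac: "b = a(Suc j := c)" unfolding c_def by (rule siblings_eq_upd[OF a(1) b(1) a(2) b(2)])
    have "c < L" using b(1) centers_subset_hier unfolding c_def hier_def by auto
    then have "(j, a, c) \<in> sibling_triples"
      using a(1) False Suc(2) bac unfolding sibling_triples_def j_def by auto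
    then obtain x' y' where x': "x' \<in> core (block L j a) \<sigma> \<omega>"
        and y': "y' \<in> core (block L j (a(Suc j := c))) \<sigma> \<omega>" and edge: "(x', y') \<in> adj big \<sigma> \<omega>"
      using a(3) b(3)[unfolded bac] by (rule open_edge_between_cores[OF one_bad linked])
    have "(x, x') \<in> (adj big \<sigma> \<omega>)\<^sup>*" by (rule IH[OF a(1) a(3) x'])
    moreover have "(y', y) \<in> (adj big \<sigma> \<omega>)\<^sup>*" using IH[OF b(1) _ b(3)] y' bac by simp
    ultimately show ?thesis using edge by (meson rtrancl_into_rtrancl rtrancl_trans)
  qed
qed

lemma kmax_size_big_ge:
  assumes one_bad: "at_most_one_bad \<sigma> \<omega>" and linked: "no_disconnected_siblings \<sigma> \<omega>"
    and t': "t' * real (L ^ r) \<le> (real (L ^ r) - 1) * t"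
  shows "t' * real (card big) \<le> real (kmax_size big \<sigma> \<omega>)"
proof -
  have "L ^ r \<le> card (good_centers big \<sigma> \<omega>) + 1"
    using card_good_centers_ge[OF one_bad, of big] card_centers[of R] centers_subset_big
    by (simp add: Int_absorb2)
  then have "real (L ^ r) - 1 \<le> real (card (good_centers big \<sigma> \<omega>))" by linarith
  then have "(real (L ^ r) - 1) * (t * real (L ^ R)) \<le> real (card (good_centers big \<sigma> \<omega>)) * (t * real (L ^ R))"
    using t_pos by (intro mult_right_mono) auto
  also have "\<dots> \<le> real (card (core big \<sigma> \<omega>))" by (rule card_core_ge)
  finally have "(real (L ^ r) - 1) * (t * real (L ^ R)) \<le> real (card (core big \<sigma> \<omega>))" .
  moreover have "real (card (core big \<sigma> \<omega>)) \<le> real (kmax_size big \<sigma> \<omega>)"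
  proof (cases "core big \<sigma> \<omega> = {}")
    case False
    then obtain x0 where x0: "x0 \<in> core big \<sigma> \<omega>" by blast
    then have x0': "x0 \<in> big" "\<sigma> x0" using core_subset_big core_open by auto
    have "(\<lambda>_. 0) \<in> centers (R + r)" "block L (R + r) (\<lambda>_. 0) = big"
      unfolding centers_def box_def big_def by auto
    then have "core big \<sigma> \<omega> \<subseteq> cluster big \<sigma> \<omega> x0"
      using core_connected[OF one_bad linked, of r "\<lambda>_. 0" x0] x0 unfolding cluster_def by auto
    then have "card (core big \<sigma> \<omega>) \<le> card (cluster big \<sigma> \<omega> x0)"
      using finite_subset[OF cluster_subset[OF x0'(1)] finite_big] by (rule card_mono[rotated])
    also have "\<dots> \<le> kmax_size big \<sigma> \<omega>" by (rule card_cluster_le_kmax_size[where \<sigma>=\<sigma>, OF finite_big x0'])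
    finally show ?thesis by simp
  qed simp
  moreover have "t' * real (card big) \<le> (real (L ^ r) - 1) * (t * real (L ^ R))"
    using mult_right_mono[OF t', of "real (L ^ R)"] unfolding card_big by (simp add: power_add mult_ac)
  ultimately show ?thesis by linarith
qed

lemma good_mask: "good u (mask (subblock u) \<sigma>) (mask (edges_in (subblock u)) \<omega>) = good u \<sigma> \<omega>"
  unfolding good_def kmax_size_mask ..

definition prob_bad_subblock :: "real \<Rightarrow> (nat \<Rightarrow> real) \<Rightarrow> real" where
  "prob_bad_subblock q J = measure_pmf.prob (config_pmf q J (block L R (\<lambda>_. 0)))
     {(\<sigma>,\<omega>). real (kmax_size (block L R (\<lambda>_. 0)) \<sigma> \<omega>) < t * real (card (block L R (\<lambda>_. 0)))}"

lemma prob_not_good: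
  assumes u: "u \<in> big"
  shows "measure_pmf.prob (config_pmf q J (subblock u)) {(\<sigma>,\<omega>). \<not> good u \<sigma> \<omega>} = prob_bad_subblock q J"
proof -
  let ?B0 = "block L R (\<lambda>_. 0)" and ?h = "swap_digits R u"
  have inv: "\<And>x. ?h (?h x) = x" by (rule swap_digits_swap_digits)
  have "u \<in> hier L" using u big_subset_hier by auto
  then have sub: "subblock u = ?h ` ?B0" unfolding subblock_def using swap_digits_block by simp
  have B0: "finite ?B0" "card ?B0 = L ^ R" using finite_block card_block zero_in_hier[OF L_pos] by auto
  have cfg: "config_pmf q J (?h ` ?B0) = map_pmf (\<lambda>(\<sigma>,\<omega>). (\<sigma> \<circ> ?h, \<omega> \<circ> image ?h)) (config_pmf q J ?B0)"
    by (rule config_pmf_image_involution[OF B0(1) inv swap_digits_eq_iff])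
  have "good u (\<sigma> \<circ> ?h) (\<omega> \<circ> image ?h) \<longleftrightarrow> t * real (card ?B0) \<le> real (kmax_size ?B0 \<sigma> \<omega>)" for \<sigma> \<omega>
    unfolding good_def sub kmax_size_image_involution[OF inv] using card_subblock[OF u, unfolded sub] B0(2)
    by simp
  then have "(\<lambda>(\<sigma>,\<omega>). (\<sigma> \<circ> ?h, \<omega> \<circ> image ?h)) -` {(\<sigma>,\<omega>). \<not> good u \<sigma> \<omega>}
      = {(\<sigma>,\<omega>). real (kmax_size ?B0 \<sigma> \<omega>) < t * real (card ?B0)}"
    by (auto simp: not_le)
  then show ?thesis unfolding sub cfg measure_map_pmf prob_bad_subblock_def by simp
qed

lemma prob_two_bad:
  assumes u: "u \<in> centers R" "u' \<in> centers R" "u \<noteq> u'"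
  shows "measure_pmf.prob (config_pmf q J big) {(\<sigma>,\<omega>). \<not> good u \<sigma> \<omega> \<and> \<not> good u' \<sigma> \<omega>}
       = prob_bad_subblock q J ^ 2"
proof -
  have uA: "u \<in> big" "u' \<in> big" using u centers_subset_big by auto
  let ?f = "\<lambda>(\<sigma>,\<omega>). ((mask (subblock u) \<sigma>, mask (edges_in (subblock u)) \<omega>),
                      (mask (subblock u') \<sigma>, mask (edges_in (subblock u')) \<omega>))"
  have "map_pmf ?f (config_pmf q J big) = pair_pmf (config_pmf q J (subblock u)) (config_pmf q J (subblock u'))"
    by (rule config_pmf_split[OF finite_big subblock_subset_big[OF uA(1)] subblock_subset_big[OF uA(2)]
          subblock_disjoint[OF u]])
  moreover have "{(\<sigma>,\<omega>). \<not> good u \<sigma> \<omega> \<and> \<not> good u' \<sigma> \<omega>}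
     = ?f -` ({(\<sigma>,\<omega>). \<not> good u \<sigma> \<omega>} \<times> {(\<sigma>,\<omega>). \<not> good u' \<sigma> \<omega>})"
    by (auto simp: good_mask)
  ultimately show ?thesis
    by (simp add: measure_map_pmf[symmetric] measure_pair_pmf_Times prob_not_good[OF uA(1)]
        prob_not_good[OF uA(2)] power2_eq_square)
qed

lemma core_cong:
  assumes j: "R \<le> j" and e: "\<And>e. e \<in> edges_in (block L j v) \<Longrightarrow> \<omega> e = \<omega>' e"
  shows "core (block L j v) \<sigma> \<omega> = core (block L j v) \<sigma> \<omega>'"
proof -
  have eq: "good u \<sigma> \<omega> = good u \<sigma> \<omega>' \<and> giant u \<sigma> \<omega> = giant u \<sigma> \<omega>'" if "u \<in> block L j v" for u
  proof -
    have "edges_in (subblock u) \<subseteq> edges_in (block L j v)"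
      by (rule edges_in_mono[OF subblock_subset_block[OF that j]])
    then have "adj (subblock u) \<sigma> \<omega> = adj (subblock u) \<sigma> \<omega>'" using e by (intro adj_cong) auto
    then have c: "cluster (subblock u) \<sigma> \<omega> = cluster (subblock u) \<sigma> \<omega>'" unfolding cluster_def by simp
    then have "kmax_size (subblock u) \<sigma> \<omega> = kmax_size (subblock u) \<sigma> \<omega>'" unfolding kmax_size_def by simp
    then show ?thesis unfolding good_def giant_def root_def c by simp
  qed
  then have "good_centers (block L j v) \<sigma> \<omega> = good_centers (block L j v) \<sigma> \<omega>'"
    unfolding good_centers_def by blast
  then show ?thesis unfolding core_def using eq by (intro SUP_cong) (auto simp: good_centers_def)
qed

lemma sibling_blocks:
  assumes "(j, v, c) \<in> sibling_triples"
  shows "block L j v \<subseteq> big" "block L j (v(Suc j := c)) \<subseteq> big"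
    and "block L j v \<inter> block L j (v(Suc j := c)) = {}"
proof -
  from assms have vc: "v \<in> centers j" "v(Suc j := c) \<in> centers j" "j \<le> R + r" "c \<noteq> v (Suc j)"
    unfolding sibling_triples_def by (auto intro: centers_upd)
  then have "v \<in> block L (R + r) (\<lambda>_. 0)" "v(Suc j := c) \<in> block L (R + r) (\<lambda>_. 0)"
    using centers_subset_big unfolding big_def by auto
  then show "block L j v \<subseteq> big" "block L j (v(Suc j := c)) \<subseteq> big"
    unfolding big_def using block_mono vc(3) by metis+
  show "block L j v \<inter> block L j (v(Suc j := c)) = {}" using vc(4) unfolding block_def by auto
qed

lemma prob_no_edge_between_cores:
  assumes jvc: "(j, v, c) \<in> sibling_triples" and J0: "\<And>n. 0 \<le> J n"
    and W: "finite W" "edges_between (block L j v) (block L j (v(Suc j := c))) \<subseteq> W"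
    and s: "0 \<le> s" "s \<le> real (card (core (block L j v) \<sigma> \<omega>))"
      "s \<le> real (card (core (block L j (v(Suc j := c))) \<sigma> \<omega>))"
  shows "measure_pmf.prob (Pi_pmf W False (edge_pmf J))
      {f. \<forall>x\<in>core (block L j v) \<sigma> \<omega>. \<forall>y\<in>core (block L j (v(Suc j := c))) \<sigma> \<omega>. \<not> f {x, y}}
    \<le> exp (- (J (Suc j) * s^2))"
proof -
  define w where "w = v(Suc j := c)"
  let ?C1 = "core (block L j v) \<sigma> \<omega>" and ?C2 = "core (block L j w) \<sigma> \<omega>"
  from jvc have j: "R \<le> j" and c: "c \<noteq> v (Suc j)" unfolding sibling_triples_def by auto
  have sub: "?C1 \<subseteq> block L j v" "?C2 \<subseteq> block L j w" using core_subset_block[OF j] by auto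
  have disj: "block L j v \<inter> block L j w = {}" using sibling_blocks(3)[OF jvc] unfolding w_def .
  have fin: "finite ?C1" "finite ?C2" using finite_subset[OF core_subset_big finite_big] by auto
  have "edge_level e = Suc j" if "e \<in> edges_between ?C1 ?C2" for e
    using that sub c edge_level_siblings[of _ L j v _ w] unfolding edges_between_def w_def by auto
  then have "measure_pmf.prob (Pi_pmf W False (edge_pmf J)) {f. \<forall>x\<in>?C1. \<forall>y\<in>?C2. \<not> f {x, y}}
      = exp (- (J (Suc j) * (real (card ?C1) * real (card ?C2))))"
    using sub disj fin W edges_between_mono[OF sub] J0
    by (intro prob_no_edge_between) (auto simp: w_def)
  also have "\<dots> \<le> exp (- (J (Suc j) * s^2))"
    using s J0[of "Suc j"] unfolding w_def by (simp add: power2_eq_square mult_left_mono mult_mono)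
  finally show ?thesis unfolding w_def .
qed

lemma prob_disconnected_siblings:
  assumes jvc: "(j, v, c) \<in> sibling_triples" and J0: "\<And>n. 0 \<le> J n"
  shows "measure_pmf.prob (config_pmf q J big) {(\<sigma>,\<omega>). disconnected_siblings j v c \<sigma> \<omega>}
         \<le> exp (- (J (Suc j) * (t / 2 * real L ^ j)^2))"
proof -
  define D1 where "D1 = block L j v"
  define D2 where "D2 = block L j (v(Suc j := c))"
  define W1 where "W1 = edges_in D1 \<union> edges_in D2"
  define W2 where "W2 = edges_between D1 D2"
  have j: "R \<le> j" using jvc unfolding sibling_triples_def by auto
  have D: "D1 \<subseteq> big" "D2 \<subseteq> big" and disj: "D1 \<inter> D2 = {}"
    using sibling_blocks[OF jvc] unfolding D1_def D2_def by auto
  have W: "W1 \<subseteq> edges_in big" "W2 \<subseteq> edges_in big" "W1 \<inter> W2 = {}"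
    using edges_in_mono[OF D(1)] edges_in_mono[OF D(2)] edges_between_subset_edges_in[OF D disj]
      edges_in_disjoint_edges_between[OF disj] unfolding W1_def W2_def by auto
  define s where "s = t / 2 * real L ^ j"
  define S where "S = {(\<sigma>, \<omega>). s \<le> real (card (core D1 \<sigma> \<omega>)) \<and> s \<le> real (card (core D2 \<sigma> \<omega>))}"
  define T where "T = (\<lambda>(\<sigma>, \<omega>). {f. \<forall>x\<in>core D1 \<sigma> \<omega>. \<forall>y\<in>core D2 \<sigma> \<omega>. \<not> f {x, y}})"
  \<comment> \<open>The cores only see the edges inside the two blocks, which are independent of those between them.\<close>
  define \<Phi> :: "config \<Rightarrow> config \<times> ((nat \<Rightarrow> nat) set \<Rightarrow> bool)"
    where "\<Phi> = (\<lambda>(\<sigma>, \<omega>). ((\<sigma>, mask W1 \<omega>), mask W2 \<omega>))"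
  have "core D1 \<sigma> (mask W1 \<omega>) = core D1 \<sigma> \<omega>" "core D2 \<sigma> (mask W1 \<omega>) = core D2 \<sigma> \<omega>" for \<sigma> \<omega>
    unfolding D1_def D2_def by (rule core_cong[OF j], simp add: mask_def W1_def D1_def D2_def)+
  moreover have "mask W2 \<omega> {x, y} = \<omega> {x, y}" if "x \<in> core D1 \<sigma> \<omega>" "y \<in> core D2 \<sigma> \<omega>" for x y \<sigma> \<omega>
  proof -
    have "(x, y) \<in> D1 \<times> D2" using that core_subset_block[OF j] unfolding D1_def D2_def by blast
    then have "{x, y} \<in> W2" unfolding W2_def edges_between_def by force
    then show ?thesis unfolding mask_def by simp
  qed
  ultimately have "{(\<sigma>,\<omega>). disconnected_siblings j v c \<sigma> \<omega>} = \<Phi> -` {(a, b). a \<in> S \<and> b \<in> T a}"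
    unfolding disconnected_siblings_def \<Phi>_def S_def T_def s_def D1_def D2_def by auto
  then have "measure_pmf.prob (config_pmf q J big) {(\<sigma>,\<omega>). disconnected_siblings j v c \<sigma> \<omega>}
      = measure_pmf.prob (map_pmf \<Phi> (config_pmf q J big)) {(a, b). a \<in> S \<and> b \<in> T a}"
    unfolding measure_map_pmf by simp
  also have "\<dots> \<le> exp (- (J (Suc j) * s^2))"
    unfolding \<Phi>_def config_pmf_split_edges[OF finite_big W]
  proof (rule measure_pair_pmf_section_le)
    fix a assume "a \<in> S"
    moreover obtain \<sigma> \<omega> where a: "a = (\<sigma>, \<omega>)" by (cases a)
    ultimately have "s \<le> real (card (core D1 \<sigma> \<omega>))" "s \<le> real (card (core D2 \<sigma> \<omega>))"
      unfolding S_def by auto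
    moreover have "finite W2" using finite_subset[OF W(2) finite_edges_in[OF finite_big]] .
    moreover have "0 \<le> s" using t_pos unfolding s_def by simp
    ultimately show "measure_pmf.prob (Pi_pmf W2 False (edge_pmf J)) (T a) \<le> exp (- (J (Suc j) * s^2))"
      using prob_no_edge_between_cores[OF jvc J0, of W2 s \<sigma> \<omega>]
      unfolding a T_def W2_def D1_def D2_def by simp
  qed simp
  finally show ?thesis unfolding s_def .
qed

lemma finite_sibling_triples: "finite sibling_triples"
  and card_sibling_triples_le: "card sibling_triples \<le> L ^ (r + 2)"
proof -
  have sub: "sibling_triples \<subseteq> (SIGMA j:{R..<R + r}. centers j \<times> {..<L})"
    unfolding sibling_triples_def by auto
  have fin: "finite (SIGMA j:{R..<R + r}. centers j \<times> {..<L})" using finite_centers by auto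
  then show "finite sibling_triples" using sub by (rule finite_subset[rotated])
  have "card sibling_triples \<le> card (SIGMA j:{R..<R + r}. centers j \<times> {..<L})" by (rule card_mono[OF fin sub])
  also have "\<dots> = (\<Sum>j\<in>{R..<R + r}. L ^ (R + r - j) * L)"
    using finite_centers by (simp add: card_SigmaI card_cartesian_product card_centers)
  also have "\<dots> \<le> L ^ (r + 2)" by (rule sum_level_counts_le[OF L_ge_2])
  finally show "card sibling_triples \<le> L ^ (r + 2)" .
qed

lemma bad_big_subset:
  assumes "t' * real (L ^ r) \<le> (real (L ^ r) - 1) * t"
  shows "{(\<sigma>,\<omega>). real (kmax_size big \<sigma> \<omega>) < t' * real (card big)}
    \<subseteq> (\<Union>(u, u')\<in>{(u, u') \<in> centers R \<times> centers R. u \<noteq> u'}. {(\<sigma>,\<omega>). \<not> good u \<sigma> \<omega> \<and> \<not> good u' \<sigma> \<omega>})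
      \<union> (\<Union>(j, v, c)\<in>sibling_triples. {(\<sigma>,\<omega>). disconnected_siblings j v c \<sigma> \<omega>})"
proof
  fix z assume z: "z \<in> {(\<sigma>,\<omega>). real (kmax_size big \<sigma> \<omega>) < t' * real (card big)}"
  obtain \<sigma> \<omega> where zz: "z = (\<sigma>, \<omega>)" by (cases z)
  have "\<not> at_most_one_bad \<sigma> \<omega> \<or> \<not> no_disconnected_siblings \<sigma> \<omega>"
    using kmax_size_big_ge[OF _ _ assms, of \<sigma> \<omega>] z zz by auto
  then show "z \<in> (\<Union>(u, u')\<in>{(u, u') \<in> centers R \<times> centers R. u \<noteq> u'}. {(\<sigma>,\<omega>). \<not> good u \<sigma> \<omega> \<and> \<not> good u' \<sigma> \<omega>})
      \<union> (\<Union>(j, v, c)\<in>sibling_triples. {(\<sigma>,\<omega>). disconnected_siblings j v c \<sigma> \<omega>})"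
    unfolding zz at_most_one_bad_def no_disconnected_siblings_def by auto
qed

lemma prob_two_bad_subblocks_le:
  "measure_pmf.prob (config_pmf q J big)
      (\<Union>(u, u')\<in>{(u, u') \<in> centers R \<times> centers R. u \<noteq> u'}. {(\<sigma>,\<omega>). \<not> good u \<sigma> \<omega> \<and> \<not> good u' \<sigma> \<omega>})
    \<le> real (L ^ r) ^ 2 * prob_bad_subblock q J ^ 2"
proof -
  define Pairs where "Pairs = {(u, u') \<in> centers R \<times> centers R. u \<noteq> u'}"
  have fin: "finite Pairs" using finite_centers unfolding Pairs_def by (auto intro: finite_subset)
  have "card Pairs \<le> card (centers R \<times> centers R)"
    using finite_centers unfolding Pairs_def by (intro card_mono) auto
  then have "card Pairs \<le> (L ^ r)^2" by (simp add: card_cartesian_product card_centers power2_eq_square)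
  then have card_Pairs: "real (card Pairs) \<le> real (L ^ r) ^ 2" by (metis of_nat_le_iff of_nat_power)
  let ?E = "\<lambda>(u, u'). {(\<sigma>,\<omega>). \<not> good u \<sigma> \<omega> \<and> \<not> good u' \<sigma> \<omega>}"
  have "measure_pmf.prob (config_pmf q J big) (\<Union>p\<in>Pairs. ?E p)
      \<le> (\<Sum>p\<in>Pairs. measure_pmf.prob (config_pmf q J big) (?E p))"
    by (rule measure_UNION_le[OF fin]) simp
  also have "\<dots> = (\<Sum>p\<in>Pairs. prob_bad_subblock q J ^ 2)"
    using prob_two_bad unfolding Pairs_def by (intro sum.cong) auto
  also have "\<dots> = real (card Pairs) * prob_bad_subblock q J ^ 2" by simp
  also have "\<dots> \<le> real (L ^ r) ^ 2 * prob_bad_subblock q J ^ 2"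
    using card_Pairs by (intro mult_right_mono) auto
  finally show ?thesis unfolding Pairs_def .
qed

lemma prob_some_disconnected_siblings_le:
  assumes J0: "\<And>n. 0 \<le> J n" and "0 \<le> b"
    and b: "\<And>j. R \<le> j \<Longrightarrow> j < R + r \<Longrightarrow> exp (- (J (Suc j) * (t / 2 * real L ^ j)^2)) \<le> b"
  shows "measure_pmf.prob (config_pmf q J big)
      (\<Union>(j, v, c)\<in>sibling_triples. {(\<sigma>,\<omega>). disconnected_siblings j v c \<sigma> \<omega>})
    \<le> real (L ^ (r + 2)) * b"
proof -
  let ?P = "measure_pmf.prob (config_pmf q J big)"
  let ?F = "\<lambda>(j, v, c). {(\<sigma>,\<omega>). disconnected_siblings j v c \<sigma> \<omega>}"
  have "?P (\<Union>i\<in>sibling_triples. ?F i) \<le> (\<Sum>i\<in>sibling_triples. ?P (?F i))"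
    by (rule measure_UNION_le[OF finite_sibling_triples]) simp
  also have "\<dots> \<le> (\<Sum>i\<in>sibling_triples. b)"
  proof (rule sum_mono)
    fix i assume i: "i \<in> sibling_triples"
    obtain j v c where ijvc: "i = (j, v, c)" by (cases i)
    have "?P {(\<sigma>,\<omega>). disconnected_siblings j v c \<sigma> \<omega>} \<le> exp (- (J (Suc j) * (t / 2 * real L ^ j)^2))"
      by (rule prob_disconnected_siblings[OF i[unfolded ijvc] J0])
    also have "\<dots> \<le> b" using i b unfolding ijvc sibling_triples_def by simp
    finally show "?P (?F i) \<le> b" unfolding ijvc by simp
  qed
  also have "\<dots> = real (card sibling_triples) * b" by simp
  also have "\<dots> \<le> real (L ^ (r + 2)) * b"
    by (rule mult_right_mono[OF of_nat_mono[OF card_sibling_triples_le] \<open>0 \<le> b\<close>])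
  finally show ?thesis .
qed

lemma prob_big_bad_le:
  assumes J0: "\<And>n. 0 \<le> J n" and t': "t' * real (L ^ r) \<le> (real (L ^ r) - 1) * t" and "0 \<le> b"
    and b: "\<And>j. R \<le> j \<Longrightarrow> j < R + r \<Longrightarrow> exp (- (J (Suc j) * (t / 2 * real L ^ j)^2)) \<le> b"
  shows "measure_pmf.prob (config_pmf q J big) {(\<sigma>,\<omega>). real (kmax_size big \<sigma> \<omega>) < t' * real (card big)}
    \<le> real (L ^ r) ^ 2 * prob_bad_subblock q J ^ 2 + real (L ^ (r + 2)) * b"
proof -
  let ?P = "measure_pmf.prob (config_pmf q J big)"
  let ?A = "\<Union>(u, u')\<in>{(u, u') \<in> centers R \<times> centers R. u \<noteq> u'}. {(\<sigma>,\<omega>). \<not> good u \<sigma> \<omega> \<and> \<not> good u' \<sigma> \<omega>}"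
  let ?B = "\<Union>(j, v, c)\<in>sibling_triples. {(\<sigma>,\<omega>). disconnected_siblings j v c \<sigma> \<omega>}"
  have "?P {(\<sigma>,\<omega>). real (kmax_size big \<sigma> \<omega>) < t' * real (card big)} \<le> ?P (?A \<union> ?B)"
    using bad_big_subset[OF t'] by (intro measure_pmf.finite_measure_mono) auto
  also have "\<dots> \<le> ?P ?A + ?P ?B" by (rule measure_Un_le) auto
  also have "\<dots> \<le> real (L ^ r) ^ 2 * prob_bad_subblock q J ^ 2 + real (L ^ (r + 2)) * b"
    using prob_two_bad_subblocks_le prob_some_disconnected_siblings_le[OF J0 \<open>0 \<le> b\<close> b] by (rule add_mono)
  finally show ?thesis .
qed

end

section \<open>The scales\<close>

lemma ex1_r_scale:
  fixes L n :: nat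
  assumes L: "2 \<le> L" and n: "1 \<le> n"
  shows "\<exists>!r. n^2 \<le> L ^ r \<and> L ^ r < L * n^2"
proof -
  define k where "k = (LEAST k. n^2 \<le> L ^ k)"
  have "n^2 < 2 ^ (n^2)" by (rule less_exp)
  also have "\<dots> \<le> L ^ (n^2)" using L by (intro power_mono) auto
  finally have "n^2 \<le> L ^ (n^2)" by simp
  then have k1: "n^2 \<le> L ^ k" unfolding k_def by (rule LeastI)
  have k2: "L ^ k < L * n^2"
  proof (cases k)
    case 0
    then show ?thesis using L n by (simp add: Suc_le_eq less_le_trans[OF _ mult_le_mono2[of 1 "n^2" L]])
  next
    case (Suc k')
    then have "L ^ k' < n^2" using not_less_Least[of k' "\<lambda>k. n^2 \<le> L ^ k"] unfolding k_def by simp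
    then show ?thesis using Suc L by simp
  qed
  have "r = k" if "n^2 \<le> L ^ r" "L ^ r < L * n^2" for r
  proof -
    have L1: "1 < L" using L by simp
    have "L ^ r < L ^ Suc k" "L ^ k < L ^ Suc r" using k1 k2 that L
      by (auto intro: less_le_trans[OF _ mult_le_mono2])
    then have "r < Suc k" "k < Suc r" by (auto intro: power_less_imp_less_exp[OF L1])
    then show ?thesis by simp
  qed
  then show ?thesis using k1 k2 by blast
qed

lemma r_scale_bounds:
  assumes "2 \<le> L" "1 \<le> n"
  shows "n^2 \<le> L ^ r_scale L n" "L ^ r_scale L n < L * n^2"
  using theI'[OF ex1_r_scale[OF assms]] unfolding r_scale_def by auto

lemma r_scale_pos:
  assumes "2 \<le> L" "2 \<le> n"
  shows "0 < r_scale L n"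
proof (rule ccontr)
  assume "\<not> 0 < r_scale L n"
  then have "n^2 \<le> 1" using r_scale_bounds(1)[OF assms(1), of n] assms(2) by simp
  then show False using assms(2) power_mono[of 2 n 2] by simp
qed

lemma R_scale_Suc: "M \<le> m \<Longrightarrow> R_scale L M (m + 1) = R_scale L M m + r_scale L (m + 1)"
  unfolding R_scale_def by simp

lemma le_R_scale:
  assumes L: "2 \<le> L" and M: "2 \<le> M" and m: "M \<le> m"
  shows "m \<le> R_scale L M m"
proof -
  have "(\<Sum>i=M..m. (1::nat)) \<le> (\<Sum>i=M..m. r_scale L i)"
    using r_scale_pos[OF L] M by (intro sum_mono) (simp add: Suc_le_eq)
  then show ?thesis unfolding R_scale_def using m by simp
qed

lemma theta_ge:
  assumes "M \<le> m" and "1 - (\<Sum>k. 1 / (real (k + M))^2) \<ge> 0.9"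
  shows "0.9 \<le> theta M m"
proof -
  have "summable (\<lambda>k. inverse (real k ^ 2))" by (rule inverse_power_summable) simp
  then have "summable (\<lambda>k. inverse (real (k + M) ^ 2))" by (subst summable_iff_shift)
  then have "summable (\<lambda>k. 1 / (real (k + M))^2)" by (simp add: divide_inverse)
  then have "(\<Sum>i=0..m - M. 1 / (real (i + M))^2) \<le> (\<Sum>k. 1 / (real (k + M))^2)"
    by (rule sum_le_suminf) auto
  moreover have "(\<Sum>k=M..m. 1 / (real k)^2) = (\<Sum>i=0..m - M. 1 / (real (i + M))^2)"
    using sum.shift_bounds_cl_nat_ivl[of "\<lambda>k. 1 / (real k)^2" 0 M "m - M"] assms(1) by simp
  ultimately show ?thesis unfolding theta_def using assms(2) by simp
qed

lemma theta_le_1: "theta M m \<le> 1"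
  unfolding theta_def by (simp add: sum_nonneg)

lemma theta_Suc_scaled_le:
  assumes "M \<le> m" "(m + 1)^2 \<le> N"
  shows "theta M (m + 1) * real N \<le> (real N - 1) * theta M m"
proof -
  have "real (m + 1) ^ 2 \<le> real N" using assms(2) by (metis of_nat_le_iff of_nat_power)
  then have N: "1 \<le> real N / real (m + 1) ^ 2" by (simp add: divide_simps)
  have "theta M (m + 1) * real N = theta M m * real N - real N / real (m + 1) ^ 2"
    unfolding theta_def using assms(1) by (simp add: algebra_simps)
  also have "\<dots> \<le> theta M m * real N - theta M m" using N theta_le_1[of M m] by linarith
  also have "\<dots> = (real N - 1) * theta M m" by (simp add: algebra_simps)
  finally show ?thesis .
qed

lemma exp_level_bound:
  fixes a t Jv :: real and L m j :: nat
  assumes L: "2 \<le> L" and a: "0 < a" and t: "0.9 \<le> t" and m: "1 \<le> m" "m \<le> Suc j"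
    and J: "a * real L powr (1 - 2 * real (Suc j)) * ln (real (Suc j)) \<le> Jv"
  shows "exp (- (Jv * (t / 2 * real L ^ j)^2)) \<le> real m powr (- a / (10 * real L))"
proof -
  have L0: "0 < real L" using L by simp
  have "(real L ^ j)^2 = real L powr real (2 * j)"
    unfolding powr_realpow[OF L0] by (simp add: power_mult[symmetric] mult.commute)
  then have "real L powr (1 - 2 * real (Suc j)) * (real L ^ j)^2
      = real L powr (1 - 2 * real (Suc j) + real (2 * j))"
    by (simp only: powr_add)
  also have "1 - 2 * real (Suc j) + real (2 * j) = -1" by simp
  also have "real L powr -1 = 1 / real L" using L0 by (simp add: powr_minus_divide)
  finally have powr: "real L powr (1 - 2 * real (Suc j)) * (real L ^ j)^2 = 1 / real L" .
  have "0.9 * 0.9 \<le> t * t" using t by (intro mult_mono) auto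
  then have "0.4 \<le> t^2" by (simp add: power2_eq_square)
  moreover have "ln (real m) \<le> ln (real (Suc j))" "0 \<le> ln (real m)" using m by auto
  ultimately have "a / (10 * real L) * ln (real m) \<le> a / (4 * real L) * t^2 * ln (real (Suc j))"
    using a L0 by (intro mult_mono) (auto simp: field_simps)
  also have "\<dots> = a * real L powr (1 - 2 * real (Suc j)) * ln (real (Suc j)) * (t / 2 * real L ^ j)^2"
    using powr by (simp add: power_mult_distrib field_simps)
  also have "\<dots> \<le> Jv * (t / 2 * real L ^ j)^2" using J by (intro mult_right_mono) auto
  finally have "- (Jv * (t / 2 * real L ^ j)^2) \<le> - a / (10 * real L) * ln (real m)" by simp
  then show ?thesis using m by (simp add: powr_def)
qed

lemma prob_bad_Suc_le:
  assumes L: "2 \<le> L" and M: "2 \<le> M" and m: "M \<le> m" and t: "0.9 \<le> theta M m"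
    and a: "0 < a" and J0: "\<And>n. 0 \<le> J n"
    and J: "\<And>n. R_scale L M m < n \<Longrightarrow> a * real L powr (1 - 2 * real n) * ln (real n) \<le> J n"
  shows "prob_bad L M q J (m + 1) \<le> real (L ^ r_scale L (m + 1)) ^ 2 * prob_bad L M q J m ^ 2
    + real (L ^ (r_scale L (m + 1) + 2)) * real m powr (- a / (10 * real L))"
proof -
  define R where "R = R_scale L M m"
  define r where "r = r_scale L (m + 1)"
  interpret renormalization L R r "theta M m" using L t by unfold_locales auto
  have "prob_bad L M q J (m + 1) = measure_pmf.prob (config_pmf q J big)
      {(\<sigma>,\<omega>). real (kmax_size big \<sigma> \<omega>) < theta M (m + 1) * real (card big)}"
    unfolding big_def unfolding prob_bad_def Let_def R_def r_def R_scale_Suc[OF m] ..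
  also have "\<dots> \<le> real (L ^ r) ^ 2 * prob_bad_subblock q J ^ 2
      + real (L ^ (r + 2)) * real m powr (- a / (10 * real L))"
  proof (rule prob_big_bad_le[OF J0 theta_Suc_scaled_le[OF m]])
    show "(m + 1)^2 \<le> L ^ r" using r_scale_bounds[OF L, of "m + 1"] unfolding r_def by simp
    fix j assume "R \<le> j" "j < R + r"
    moreover have "m \<le> R" unfolding R_def by (rule le_R_scale[OF L M m])
    ultimately show "exp (- (J (Suc j) * (theta M m / 2 * real L ^ j)^2)) \<le> real m powr (- a / (10 * real L))"
      using J[of "Suc j"] M m unfolding R_def by (intro exp_level_bound[OF L a t]) auto
  qed simp
  also have "prob_bad_subblock q J = prob_bad L M q J m"
    unfolding prob_bad_subblock_def unfolding prob_bad_def R_def Let_def ..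
  finally show ?thesis unfolding r_def .
qed

theorem lemma2p2:
  fixes L M m :: nat and a q :: real and J :: "nat \<Rightarrow> real"
  assumes "L \<ge> 2"
    and "a > 200 * real L"
    and "M > L^2"
    and "1 - (\<Sum>k. 1 / (real (k + M))^2) \<ge> 0.9"
    and "real M ^ 2 \<ge> 2 ^ 14"
    and "m \<ge> M"
    and "0 \<le> q" "q \<le> 1"
    and "\<forall>n. J n \<ge> 0"
    and "\<forall>n > R_scale L M m. J n \<ge> a * real L powr (1 - 2 * real n) * ln (real n)"
  shows "prob_bad L M q J (m + 1)
           \<le> real L ^ 2 * real (m + 1) ^ 4 * (prob_bad L M q J m)^2
             + real (m + 1) ^ 2 * real L ^ 3 * real m powr (- a / (10 * real L))"
proof -
  have L: "2 \<le> L" using assms(1) .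
  have "2 * 2 \<le> L^2" using power_mono[OF L, of 2] by (simp add: power2_eq_square)
  then have M: "2 \<le> M" using assms(3) by linarith
  define N where "N = L ^ r_scale L (m + 1)"
  define p where "p = prob_bad L M q J m"
  define b where "b = real m powr (- a / (10 * real L))"
  have main: "prob_bad L M q J (m + 1) \<le> real N ^ 2 * p ^ 2 + real L ^ 2 * real N * b"
    using prob_bad_Suc_le[OF L M assms(6) theta_ge[OF assms(6,4)], of a J q] assms(2,9,10)
    unfolding N_def p_def b_def by (simp add: power_add power2_eq_square mult_ac)
  have "N \<le> L * (m + 1)^2" using r_scale_bounds(2)[OF L, of "m + 1"] unfolding N_def by simp
  then have NL: "real N \<le> real L * real (m + 1) ^ 2" using of_nat_mono[of N "L * (m + 1)^2"] by simp
  have "real N ^ 2 \<le> (real L * real (m + 1) ^ 2) ^ 2" using NL by (intro power_mono) auto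
  then have "real N ^ 2 * p ^ 2 \<le> real L ^ 2 * real (m + 1) ^ 4 * p ^ 2"
    by (intro mult_right_mono) (simp_all add: power_mult_distrib flip: power_mult)
  moreover have "real L ^ 2 * real N * b \<le> real (m + 1) ^ 2 * real L ^ 3 * b"
    using mult_left_mono[OF NL, of "real L ^ 2"] unfolding b_def
    by (intro mult_right_mono) (simp_all add: power2_eq_square power3_eq_cube mult_ac)
  ultimately show ?thesis using main unfolding p_def b_def by linarith
qed

end
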